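(* Let $L$ be a multisorted algebra in the first order signature without equality. Then $L$ satisfies axioms (0)–(10) if and only if $L$ is isomorphic to a subalgebra of the first order algebra (without equality) $A(W)$ of some set $W$.
   Context: Throughout, the Boolean prime ideal theorem is assumed. Signature. There is a sort $n$ for each natural number $n\ge0$. For every function $\alpha\colon\{1,\dots,n\}\to\{1,\dots,k\}$ there is a unary function symbol ("substitution") $\alpha\colon n\to k$ (argument of sort $n$, value of sort $k$). Each sort has constants $0,1$, binary $\vee,\wedge$, unary $\neg$; for each $n$ there is $\exists\colon n+1\to n$. For substitutions $\alpha\colon k\to n$, $\beta\colon n\to m$, $\beta\circ\alpha\colon k\to m$ is the substitution symbol of the composite function; $\beta(\alpha(r))$ is composition in an algebra; $\mathrm{id}$ is the identity substitution. The associated cylindrification of $\exists\colon n+1\to n$ is $c\colon n\to n+1$, $c(i)=i$; $\exists^{(n)}$ is $n$-fold projection. Concrete algebras. For a set $W$: $\alpha^{\mathrm{tuple}}(x_1,\dots,x_k)=(x_{\alpha(1)},\dots,x_{\alpha(n)})$, $\alpha^{\mathrm{relation}}(r)=\{\bar x\in W^k:\alpha^{\mathrm{tuple}}(\bar x)\in r\}$. The first order algebra $A(W)$ (without equality) interprets sort $n$ as $\mathcal P(W^n)$, $\alpha$ as $\alpha^{\mathrm{relation}}$, $0,1,\vee,\wedge,\neg$ as $\emptyset,W^n,\cup,\cap$, complement in $W^n$, and $\exists(r)=\{(x_1,\dots,x_n):\exists y\,(x_1,\dots,x_n,y)\in r\}$. Partitioning cylindrifications: for $k_1,\dots,k_m$,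 $n=\sum k_j$, the substitutions $c_i\colon k_i\to n$, $c_i(l)=l+\sum_{j<i}k_j$. $x\le y$ (also $y\ge x$) means $x=x\wedge y$. Axioms: (0) For partitioning cylindrifications $c_1,\dots,c_m$ and $r_i,s_i$ of sort $k_i$: if $\bigvee_i c_i(s_i)\ge\bigwedge_i c_i(r_i)$ then $s_i\ge r_i$ for some $i$ (including $m=0$: $0\ge1$ fails in sort $0$). (1) Each sort is a bounded distributive lattice. (2) Substitutions preserve $0,1,\vee,\wedge$. (3) $(\beta\circ\alpha)(r)=\beta(\alpha(r))$. (4) $\mathrm{id}(r)=r$. (5) $\alpha(\neg r)=\neg\alpha(r)$. (6) $r\vee\neg r=1$, $r\wedge\neg r=0$. (7) $\exists(0)=0$, $\exists(r\vee s)=\exists(r)\vee\exists(s)$. (8) $r\le c(\exists(r))$. (9) $\exists(r\wedge c(s))=\exists(r)\wedge s$. (10) For substitutions $\alpha_i\colon k_i\to m$ ($i=1,\dots,n$), let $\beta_i\colon k_i+1\to m+n$ with $\beta_i(j)=\alpha_i(j)$ for $j\le k_i$ and $\beta_i(k_i+1)=m+i$. Then for all $r_i$ of sort $k_i+1$: $\exists^{(n)}(\bigwedge_i\beta_i(r_i))=\bigwedge_i\alpha_i(\exists(r_i))$. *)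

theory Defs
  imports Main
begin

text \<open>Conventions: indices are 0-based. A function alpha from {1..n} to {1..k}
  is represented by a list of length n with entries < k (entry i = alpha(i+1)-1).
  The substitution symbol alpha : n -> k is applied as msubst L k alpha
  (argument sort = length alpha, value sort = k). A multisorted algebra uses one ambient type with a carrier
  set for each sort n and sort-indexed operations.\<close>

record 'a msalg =
  carr    :: "nat \<Rightarrow> 'a set"
  msubst  :: "nat \<Rightarrow> nat list \<Rightarrow> 'a \<Rightarrow> 'a"
  bot_s   :: "nat \<Rightarrow> 'a"
  top_s   :: "nat \<Rightarrow> 'a"
  sup_s   :: "nat \<Rightarrow> 'a \<Rightarrow> 'a \<Rightarrow> 'a"
  inf_s   :: "nat \<Rightarrow> 'a \<Rightarrow> 'a \<Rightarrow> 'a"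
  neg_s   :: "nat \<Rightarrow> 'a \<Rightarrow> 'a"
  ex_s    :: "nat \<Rightarrow> 'a \<Rightarrow> 'a"   (* ex_s n : sort n+1 -> sort n *)

definition subst_sym :: "nat \<Rightarrow> nat \<Rightarrow> nat list \<Rightarrow> bool" where
  "subst_sym n k \<alpha> \<longleftrightarrow> length \<alpha> = n \<and> (\<forall>j\<in>set \<alpha>. j < k)"

definition is_msalg :: "'a msalg \<Rightarrow> bool" where
  "is_msalg L \<longleftrightarrow>
     (\<forall>n. bot_s L n \<in> carr L n \<and> top_s L n \<in> carr L n) \<and>
     (\<forall>n. \<forall>x\<in>carr L n. \<forall>y\<in>carr L n.
          sup_s L n x y \<in> carr L n \<and> inf_s L n x y \<in> carr L n) \<and>
     (\<forall>n. \<forall>x\<in>carr L n. neg_s L n x \<in> carr L n) \<and>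
     (\<forall>n. \<forall>x\<in>carr L (Suc n). ex_s L n x \<in> carr L n) \<and>
     (\<forall>n k \<alpha>. subst_sym n k \<alpha> \<longrightarrow> (\<forall>x\<in>carr L n. msubst L k \<alpha> x \<in> carr L k))"

definition le_s :: "'a msalg \<Rightarrow> nat \<Rightarrow> 'a \<Rightarrow> 'a \<Rightarrow> bool" where
  "le_s L n x y \<longleftrightarrow> x = inf_s L n x y"

definition big_inf :: "'a msalg \<Rightarrow> nat \<Rightarrow> 'a list \<Rightarrow> 'a" where
  "big_inf L n xs = foldr (inf_s L n) xs (top_s L n)"

definition big_sup :: "'a msalg \<Rightarrow> nat \<Rightarrow> 'a list \<Rightarrow> 'a" where
  "big_sup L n xs = foldr (sup_s L n) xs (bot_s L n)"

definition cyl :: "nat \<Rightarrow> nat list" where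
  "cyl n = [0..<n]"

fun ex_iter :: "'a msalg \<Rightarrow> nat \<Rightarrow> nat \<Rightarrow> 'a \<Rightarrow> 'a" where
  "ex_iter L m 0 r = r"
| "ex_iter L m (Suc n) r = ex_iter L m n (ex_s L (m + n) r)"

text \<open>partitioning cylindrification c_i : k_i -> sum ks\<close>
definition part_cyl :: "nat list \<Rightarrow> nat \<Rightarrow> nat list" where
  "part_cyl ks i = [sum_list (take i ks)..<sum_list (take i ks) + ks ! i]"

definition ax0 :: "'a msalg \<Rightarrow> bool" where
  "ax0 L \<longleftrightarrow> (\<forall>ks rs ss. length rs = length ks \<and> length ss = length ks \<and>
      (\<forall>i<length ks. rs ! i \<in> carr L (ks ! i) \<and> ss ! i \<in> carr L (ks ! i)) \<longrightarrow>
      le_s L (sum_list ks)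
        (big_inf L (sum_list ks) (map (\<lambda>i. msubst L (sum_list ks) (part_cyl ks i) (rs ! i)) [0..<length ks]))
        (big_sup L (sum_list ks) (map (\<lambda>i. msubst L (sum_list ks) (part_cyl ks i) (ss ! i)) [0..<length ks]))
      \<longrightarrow> (\<exists>i<length ks. le_s L (ks ! i) (rs ! i) (ss ! i)))"

definition ax1 :: "'a msalg \<Rightarrow> bool" where
  "ax1 L \<longleftrightarrow> (\<forall>n. \<forall>x\<in>carr L n. \<forall>y\<in>carr L n. \<forall>z\<in>carr L n.
      sup_s L n (sup_s L n x y) z = sup_s L n x (sup_s L n y z) \<and>
      inf_s L n (inf_s L n x y) z = inf_s L n x (inf_s L n y z) \<and>
      sup_s L n x y = sup_s L n y x \<and>
      inf_s L n x y = inf_s L n y x \<and>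
      sup_s L n x (inf_s L n x y) = x \<and>
      inf_s L n x (sup_s L n x y) = x \<and>
      inf_s L n x (sup_s L n y z) = sup_s L n (inf_s L n x y) (inf_s L n x z) \<and>
      sup_s L n x (bot_s L n) = x \<and>
      inf_s L n x (top_s L n) = x)"

definition ax2 :: "'a msalg \<Rightarrow> bool" where
  "ax2 L \<longleftrightarrow> (\<forall>n k \<alpha>. subst_sym n k \<alpha> \<longrightarrow>
      msubst L k \<alpha> (bot_s L n) = bot_s L k \<and>
      msubst L k \<alpha> (top_s L n) = top_s L k \<and>
      (\<forall>x\<in>carr L n. \<forall>y\<in>carr L n.
         msubst L k \<alpha> (sup_s L n x y) = sup_s L k (msubst L k \<alpha> x) (msubst L k \<alpha> y) \<and>
         msubst L k \<alpha> (inf_s L n x y) = inf_s L k (msubst L k \<alpha> x) (msubst L k \<alpha> y)))"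

text \<open>alpha : k -> n, beta : n -> m; the composite beta o alpha is map (nth beta) alpha\<close>
definition ax3 :: "'a msalg \<Rightarrow> bool" where
  "ax3 L \<longleftrightarrow> (\<forall>k n m \<alpha> \<beta>. subst_sym k n \<alpha> \<and> subst_sym n m \<beta> \<longrightarrow>
      (\<forall>r\<in>carr L k. msubst L m (map (nth \<beta>) \<alpha>) r = msubst L m \<beta> (msubst L n \<alpha> r)))"

definition ax4 :: "'a msalg \<Rightarrow> bool" where
  "ax4 L \<longleftrightarrow> (\<forall>n. \<forall>r\<in>carr L n. msubst L n [0..<n] r = r)"

definition ax5 :: "'a msalg \<Rightarrow> bool" where
  "ax5 L \<longleftrightarrow> (\<forall>n k \<alpha>. subst_sym n k \<alpha> \<longrightarrow>
      (\<forall>r\<in>carr L n. msubst L k \<alpha> (neg_s L n r) = neg_s L k (msubst L k \<alpha> r)))"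

definition ax6 :: "'a msalg \<Rightarrow> bool" where
  "ax6 L \<longleftrightarrow> (\<forall>n. \<forall>r\<in>carr L n.
      sup_s L n r (neg_s L n r) = top_s L n \<and> inf_s L n r (neg_s L n r) = bot_s L n)"

definition ax7 :: "'a msalg \<Rightarrow> bool" where
  "ax7 L \<longleftrightarrow> (\<forall>n. ex_s L n (bot_s L (Suc n)) = bot_s L n \<and>
      (\<forall>r\<in>carr L (Suc n). \<forall>s\<in>carr L (Suc n).
         ex_s L n (sup_s L (Suc n) r s) = sup_s L n (ex_s L n r) (ex_s L n s)))"

definition ax8 :: "'a msalg \<Rightarrow> bool" where
  "ax8 L \<longleftrightarrow> (\<forall>n. \<forall>r\<in>carr L (Suc n).
      le_s L (Suc n) r (msubst L (Suc n) (cyl n) (ex_s L n r)))"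

definition ax9 :: "'a msalg \<Rightarrow> bool" where
  "ax9 L \<longleftrightarrow> (\<forall>n. \<forall>r\<in>carr L (Suc n). \<forall>s\<in>carr L n.
      ex_s L n (inf_s L (Suc n) r (msubst L (Suc n) (cyl n) s)) = inf_s L n (ex_s L n r) s)"

text \<open>alphas ! i : k_i -> m (k_i = length (alphas ! i)), i < n;
  beta_i = alpha_i extended by k_i |-> m + i (0-based).\<close>
definition ax10 :: "'a msalg \<Rightarrow> bool" where
  "ax10 L \<longleftrightarrow> (\<forall>m (alphas :: nat list list) rs.
      length rs = length alphas \<and>
      (\<forall>i<length alphas. (\<forall>j\<in>set (alphas ! i). j < m) \<and>
                          rs ! i \<in> carr L (Suc (length (alphas ! i)))) \<longrightarrow>
      ex_iter L m (length alphas)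
        (big_inf L (m + length alphas)
           (map (\<lambda>i. msubst L (m + length alphas) (alphas ! i @ [m + i]) (rs ! i)) [0..<length alphas]))
      = big_inf L m
           (map (\<lambda>i. msubst L m (alphas ! i) (ex_s L (length (alphas ! i)) (rs ! i))) [0..<length alphas]))"

definition satisfies_axioms :: "'a msalg \<Rightarrow> bool" where
  "satisfies_axioms L \<longleftrightarrow> ax0 L \<and> ax1 L \<and> ax2 L \<and> ax3 L \<and> ax4 L \<and> ax5 L \<and>
     ax6 L \<and> ax7 L \<and> ax8 L \<and> ax9 L \<and> ax10 L"

definition tuples :: "'w set \<Rightarrow> nat \<Rightarrow> 'w list set" where
  "tuples W n = {xs. length xs = n \<and> set xs \<subseteq> W}"

definition fo_alg :: "'w set \<Rightarrow> 'w list set msalg" where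
  "fo_alg W = \<lparr> carr = (\<lambda>n. Pow (tuples W n)),
     msubst = (\<lambda>k \<alpha> r. {xs \<in> tuples W k. map (nth xs) \<alpha> \<in> r}),
     bot_s = (\<lambda>n. {}),
     top_s = (\<lambda>n. tuples W n),
     sup_s = (\<lambda>n r s. r \<union> s),
     inf_s = (\<lambda>n r s. r \<inter> s),
     neg_s = (\<lambda>n r. tuples W n - r),
     ex_s = (\<lambda>n r. {xs \<in> tuples W n. \<exists>y\<in>W. xs @ [y] \<in> r}) \<rparr>"

definition subalgebra :: "(nat \<Rightarrow> 'b set) \<Rightarrow> 'b msalg \<Rightarrow> bool" where
  "subalgebra S M \<longleftrightarrow> (\<forall>n. S n \<subseteq> carr M n) \<and>
     (\<forall>n. bot_s M n \<in> S n \<and> top_s M n \<in> S n) \<and>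
     (\<forall>n. \<forall>x\<in>S n. \<forall>y\<in>S n. sup_s M n x y \<in> S n \<and> inf_s M n x y \<in> S n) \<and>
     (\<forall>n. \<forall>x\<in>S n. neg_s M n x \<in> S n) \<and>
     (\<forall>n. \<forall>x\<in>S (Suc n). ex_s M n x \<in> S n) \<and>
     (\<forall>n k \<alpha>. subst_sym n k \<alpha> \<longrightarrow> (\<forall>x\<in>S n. msubst M k \<alpha> x \<in> S k))"

definition is_hom :: "(nat \<Rightarrow> 'a \<Rightarrow> 'b) \<Rightarrow> 'a msalg \<Rightarrow> 'b msalg \<Rightarrow> bool" where
  "is_hom h L M \<longleftrightarrow>
     (\<forall>n. h n (bot_s L n) = bot_s M n \<and> h n (top_s L n) = top_s M n) \<and>
     (\<forall>n. \<forall>x\<in>carr L n. \<forall>y\<in>carr L n.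
        h n (sup_s L n x y) = sup_s M n (h n x) (h n y) \<and>
        h n (inf_s L n x y) = inf_s M n (h n x) (h n y)) \<and>
     (\<forall>n. \<forall>x\<in>carr L n. h n (neg_s L n x) = neg_s M n (h n x)) \<and>
     (\<forall>n. \<forall>x\<in>carr L (Suc n). h n (ex_s L n x) = ex_s M n (h (Suc n) x)) \<and>
     (\<forall>n k \<alpha>. subst_sym n k \<alpha> \<longrightarrow>
        (\<forall>x\<in>carr L n. h k (msubst L k \<alpha> x) = msubst M k \<alpha> (h n x)))"

definition is_iso :: "'a msalg \<Rightarrow> 'b msalg \<Rightarrow> bool" where
  "is_iso L M \<longleftrightarrow> (\<exists>h. (\<forall>n. bij_betw (h n) (carr L n) (carr M n)) \<and> is_hom h L M)"

definition iso_to_subalg_of_fo :: "'a msalg \<Rightarrow> 'w set \<Rightarrow> bool" where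
  "iso_to_subalg_of_fo L W \<longleftrightarrow>
     (\<exists>S. subalgebra S (fo_alg W) \<and> is_iso L ((fo_alg W)\<lparr>carr := S\<rparr>))"

end

theory Submission
  imports Defs
begin

text \<open>Soundness: under an injective homomorphism into A(W) every axiom becomes a statement about
  relations on W, which is checked directly.

  Completeness is a Henkin construction. An element r of sort n together with a list v of n
  parameters is read as the statement r(v); a finite list of statements is consistent if their
  conjunction, read in the sort given by their parameters, is nonzero. The parameters are
  witness terms Eps \<psi> ts, one for each \<exists>y. \<psi>(ts, y), and the Henkin axioms
  \<exists>y. \<psi>(ts, y) \<longrightarrow> \<psi>(ts, Eps \<psi> ts) are jointly consistent because adding one with a
  fresh witness is conservative (axioms (8)-(10)). By Zorn's lemma they extend to a maximal
  consistent set M, and r \<mapsto> {v. r(v) \<in> M} is a homomorphism into A(witness terms). It is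
  injective because sort 0 is two-valued (axiom (0)), so that every nonzero element, projected
  to sort 0, is true and hence holds of some tuple. If \<exists>(1) = 0 the positive sorts are trivial
  and L is A(\<emptyset>). Finally the witness terms inject into nat \<times> 'a set.\<close>

locale boolean_algebra_on =
  fixes B :: "'a set" and meet join :: "'a \<Rightarrow> 'a \<Rightarrow> 'a" and neg :: "'a \<Rightarrow> 'a" and zero one :: 'a
  assumes zero_closed: "zero \<in> B" and one_closed: "one \<in> B"
    and meet_closed: "x \<in> B \<Longrightarrow> y \<in> B \<Longrightarrow> meet x y \<in> B"
    and join_closed: "x \<in> B \<Longrightarrow> y \<in> B \<Longrightarrow> join x y \<in> B"
    and neg_closed: "x \<in> B \<Longrightarrow> neg x \<in> B"
    and join_assoc: "x \<in> B \<Longrightarrow> y \<in> B \<Longrightarrow> z \<in> B \<Longrightarrow> join (join x y) z = join x (join y z)"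
    and meet_assoc: "x \<in> B \<Longrightarrow> y \<in> B \<Longrightarrow> z \<in> B \<Longrightarrow> meet (meet x y) z = meet x (meet y z)"
    and join_comm: "x \<in> B \<Longrightarrow> y \<in> B \<Longrightarrow> join x y = join y x"
    and meet_comm: "x \<in> B \<Longrightarrow> y \<in> B \<Longrightarrow> meet x y = meet y x"
    and join_meet_absorb: "x \<in> B \<Longrightarrow> y \<in> B \<Longrightarrow> join x (meet x y) = x"
    and meet_join_absorb: "x \<in> B \<Longrightarrow> y \<in> B \<Longrightarrow> meet x (join x y) = x"
    and meet_join_distrib: "x \<in> B \<Longrightarrow> y \<in> B \<Longrightarrow> z \<in> B \<Longrightarrow> meet x (join y z) = join (meet x y) (meet x z)"
    and join_zero: "x \<in> B \<Longrightarrow> join x zero = x"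
    and meet_one: "x \<in> B \<Longrightarrow> meet x one = x"
    and join_neg: "x \<in> B \<Longrightarrow> join x (neg x) = one"
    and meet_neg: "x \<in> B \<Longrightarrow> meet x (neg x) = zero"
begin

definition le :: "'a \<Rightarrow> 'a \<Rightarrow> bool" where
  "le x y \<longleftrightarrow> x = meet x y"

lemma meet_idem: "x \<in> B \<Longrightarrow> meet x x = x"
  by (metis meet_join_absorb join_zero zero_closed)

lemma zero_join: "x \<in> B \<Longrightarrow> join zero x = x"
  by (metis join_comm join_zero zero_closed)

lemma zero_meet: "x \<in> B \<Longrightarrow> meet zero x = zero"
  by (metis meet_join_absorb zero_join zero_closed)

lemma meet_zero: "x \<in> B \<Longrightarrow> meet x zero = zero"
  by (metis meet_comm zero_meet zero_closed)

lemma one_meet: "x \<in> B \<Longrightarrow> meet one x = x"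
  by (metis meet_comm meet_one one_closed)

lemma one_join: "x \<in> B \<Longrightarrow> join one x = one"
  using join_meet_absorb[OF one_closed, of x] by (simp add: one_meet)

lemma join_one: "x \<in> B \<Longrightarrow> join x one = one"
  by (simp add: join_comm one_closed one_join)

lemma neg_one: "neg one = zero"
  using meet_neg[OF one_closed] by (simp add: one_meet neg_closed one_closed)

lemma neg_zero: "neg zero = one"
  using join_neg[OF zero_closed] by (simp add: zero_join neg_closed zero_closed)

lemma meet_split_neg: "x \<in> B \<Longrightarrow> a \<in> B \<Longrightarrow> x = join (meet x a) (meet x (neg a))"
  by (metis join_neg meet_join_distrib meet_one neg_closed)

lemma eq_zero_by_cases: "x \<in> B \<Longrightarrow> a \<in> B \<Longrightarrow> meet x a = zero \<Longrightarrow> meet x (neg a) = zero \<Longrightarrow> x = zero"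
  by (metis meet_split_neg join_zero zero_closed)

lemma meet_eq_zero_by_cases:
  assumes "x \<in> B" "y \<in> B" "a \<in> B" and "meet a x = zero" and "meet (neg a) y = zero"
  shows "meet x y = zero"
proof (rule eq_zero_by_cases)
  show "meet (meet x y) a = zero"
    using assms by (metis meet_assoc meet_comm meet_closed zero_meet)
  show "meet (meet x y) (neg a) = zero"
    using assms by (metis meet_assoc meet_comm meet_closed neg_closed zero_meet)
qed (use assms in \<open>simp_all add: meet_closed\<close>)

lemma le_refl: "x \<in> B \<Longrightarrow> le x x"
  by (simp add: le_def meet_idem)

lemma le_trans: "x \<in> B \<Longrightarrow> y \<in> B \<Longrightarrow> z \<in> B \<Longrightarrow> le x y \<Longrightarrow> le y z \<Longrightarrow> le x z"
  unfolding le_def by (metis meet_assoc)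

lemma le_antisym: "x \<in> B \<Longrightarrow> y \<in> B \<Longrightarrow> le x y \<Longrightarrow> le y x \<Longrightarrow> x = y"
  unfolding le_def by (metis meet_comm)

lemma le_meet_iff: "x \<in> B \<Longrightarrow> y \<in> B \<Longrightarrow> z \<in> B \<Longrightarrow> le x (meet y z) \<longleftrightarrow> le x y \<and> le x z"
  unfolding le_def by (metis meet_assoc meet_comm meet_idem meet_closed)

lemma meet_le1: "x \<in> B \<Longrightarrow> y \<in> B \<Longrightarrow> le (meet x y) x"
  using le_meet_iff le_refl meet_closed by blast

lemma meet_le2: "x \<in> B \<Longrightarrow> y \<in> B \<Longrightarrow> le (meet x y) y"
  using le_meet_iff le_refl meet_closed by blast

lemma le_join1: "x \<in> B \<Longrightarrow> y \<in> B \<Longrightarrow> le x (join x y)"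
  by (simp add: meet_join_absorb le_def)

lemma le_join2: "x \<in> B \<Longrightarrow> y \<in> B \<Longrightarrow> le y (join x y)"
  by (metis join_comm le_join1)

lemma le_one: "x \<in> B \<Longrightarrow> le x one"
  by (simp add: le_def meet_one)

lemma le_zero_iff: "x \<in> B \<Longrightarrow> le x zero \<longleftrightarrow> x = zero"
  by (auto simp: le_def meet_zero zero_meet)

lemma nonzero_if_le: "x \<in> B \<Longrightarrow> y \<in> B \<Longrightarrow> le x y \<Longrightarrow> x \<noteq> zero \<Longrightarrow> y \<noteq> zero"
  using le_zero_iff by blast

lemma le_iff_meet_neg_eq_zero:
  assumes "x \<in> B" "a \<in> B"
  shows "le x a \<longleftrightarrow> meet x (neg a) = zero"
proof
  assume "le x a"
  then have "meet x (neg a) = meet x (meet a (neg a))"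
    using assms by (metis le_def meet_assoc neg_closed)
  then show "meet x (neg a) = zero"
    using assms by (simp add: meet_neg meet_zero)
next
  assume "meet x (neg a) = zero"
  then have "x = meet x a"
    using assms meet_split_neg[of x a] by (simp add: join_zero meet_closed)
  then show "le x a"
    by (simp add: le_def)
qed

lemma neq_imp_meet_neg_neq_zero:
  "x \<in> B \<Longrightarrow> y \<in> B \<Longrightarrow> x \<noteq> y \<Longrightarrow> meet x (neg y) \<noteq> zero \<or> meet y (neg x) \<noteq> zero"
  using le_iff_meet_neg_eq_zero le_antisym by blast

lemma meet_join_neg_neg:
  assumes "a \<in> B" "b \<in> B"
  shows "meet (join a b) (meet (neg a) (neg b)) = zero"
proof -
  have "meet a (meet (neg a) (neg b)) = zero"
    using assms by (metis meet_assoc meet_neg zero_meet neg_closed)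
  moreover have "meet b (meet (neg a) (neg b)) = zero"
    using assms by (metis meet_assoc meet_comm meet_neg meet_zero neg_closed)
  ultimately show ?thesis
    using assms by (metis meet_join_distrib meet_comm join_zero zero_closed meet_closed neg_closed join_closed)
qed

end

locale ms_algebra =
  fixes L :: "'a msalg"
  assumes is_msalg: "is_msalg L"
begin

lemma bot_closed [simp]: "bot_s L n \<in> carr L n"
  and top_closed [simp]: "top_s L n \<in> carr L n"
  and sup_closed [simp]: "x \<in> carr L n \<Longrightarrow> y \<in> carr L n \<Longrightarrow> sup_s L n x y \<in> carr L n"
  and inf_closed [simp]: "x \<in> carr L n \<Longrightarrow> y \<in> carr L n \<Longrightarrow> inf_s L n x y \<in> carr L n"
  and neg_closed [simp]: "x \<in> carr L n \<Longrightarrow> neg_s L n x \<in> carr L n"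
  and ex_closed [simp]: "x \<in> carr L (Suc n) \<Longrightarrow> ex_s L n x \<in> carr L n"
  and subst_closed [simp]: "subst_sym n k \<alpha> \<Longrightarrow> x \<in> carr L n \<Longrightarrow> msubst L k \<alpha> x \<in> carr L k"
  using is_msalg by (auto simp: is_msalg_def)

lemma big_inf_closed [simp]: "set xs \<subseteq> carr L n \<Longrightarrow> big_inf L n xs \<in> carr L n"
  by (induction xs) (auto simp: big_inf_def)

lemma big_sup_closed [simp]: "set xs \<subseteq> carr L n \<Longrightarrow> big_sup L n xs \<in> carr L n"
  by (induction xs) (auto simp: big_sup_def)

lemma ex_iter_closed [simp]: "x \<in> carr L (m + n) \<Longrightarrow> ex_iter L m n x \<in> carr L m"
  by (induction n arbitrary: x) auto

end

locale fol_algebra = ms_algebra +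
  assumes fo_axioms: "satisfies_axioms L"

context fol_algebra
begin

lemma sort_boolean_algebra: "boolean_algebra_on (carr L n) (inf_s L n) (sup_s L n) (neg_s L n) (bot_s L n) (top_s L n)"
proof -
  have "ax1 L" "ax6 L"
    using fo_axioms by (simp_all add: satisfies_axioms_def)
  then have A1: "\<And>x y z. x \<in> carr L n \<Longrightarrow> y \<in> carr L n \<Longrightarrow> z \<in> carr L n \<Longrightarrow>
      sup_s L n (sup_s L n x y) z = sup_s L n x (sup_s L n y z) \<and>
      inf_s L n (inf_s L n x y) z = inf_s L n x (inf_s L n y z) \<and>
      sup_s L n x y = sup_s L n y x \<and>
      inf_s L n x y = inf_s L n y x \<and>
      sup_s L n x (inf_s L n x y) = x \<and>
      inf_s L n x (sup_s L n x y) = x \<and>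
      inf_s L n x (sup_s L n y z) = sup_s L n (inf_s L n x y) (inf_s L n x z) \<and>
      sup_s L n x (bot_s L n) = x \<and>
      inf_s L n x (top_s L n) = x"
    and A6: "\<And>x. x \<in> carr L n \<Longrightarrow> sup_s L n x (neg_s L n x) = top_s L n \<and> inf_s L n x (neg_s L n x) = bot_s L n"
    unfolding ax1_def ax6_def by blast+
  show ?thesis
    by unfold_locales (meson A1 A6 bot_closed top_closed sup_closed inf_closed neg_closed)+
qed

end

sublocale fol_algebra \<subseteq> sort: boolean_algebra_on "carr L n" "inf_s L n" "sup_s L n" "neg_s L n" "bot_s L n" "top_s L n"
  for n
  by (rule sort_boolean_algebra)

context fol_algebra
begin

lemma le_s_eq_sort_le: "le_s L n = sort.le n"
  by (intro ext) (simp add: sort.le_def le_s_def)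

end

lemma subst_sym_cyl: "subst_sym n (Suc n) (cyl n)"
  by (auto simp: subst_sym_def cyl_def)

lemma subst_sym_append_last:
  "subst_sym k m \<alpha> \<Longrightarrow> subst_sym (Suc k) (Suc m) (\<alpha> @ [m])"
  by (auto simp: subst_sym_def)

lemma map_nth_cyl_append: "length xs = n \<Longrightarrow> map (nth (xs @ [y])) (cyl n) = xs"
  by (rule nth_equalityI) (auto simp: cyl_def nth_append)

lemma map_nth_cyl_id: "set \<alpha> \<subseteq> {..<n} \<Longrightarrow> map (nth (cyl n)) \<alpha> = \<alpha>"
  by (rule map_idI) (auto simp: cyl_def)

context fol_algebra
begin

lemma axiom0: "ax0 L" and axiom10: "ax10 L"
  using fo_axioms by (simp_all add: satisfies_axioms_def)

lemma subst_bot [simp]: "subst_sym n k \<alpha> \<Longrightarrow> msubst L k \<alpha> (bot_s L n) = bot_s L k"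
  and subst_top [simp]: "subst_sym n k \<alpha> \<Longrightarrow> msubst L k \<alpha> (top_s L n) = top_s L k"
  and subst_sup: "subst_sym n k \<alpha> \<Longrightarrow> x \<in> carr L n \<Longrightarrow> y \<in> carr L n \<Longrightarrow>
    msubst L k \<alpha> (sup_s L n x y) = sup_s L k (msubst L k \<alpha> x) (msubst L k \<alpha> y)"
  and subst_inf: "subst_sym n k \<alpha> \<Longrightarrow> x \<in> carr L n \<Longrightarrow> y \<in> carr L n \<Longrightarrow>
    msubst L k \<alpha> (inf_s L n x y) = inf_s L k (msubst L k \<alpha> x) (msubst L k \<alpha> y)"
  and subst_neg: "subst_sym n k \<alpha> \<Longrightarrow> x \<in> carr L n \<Longrightarrow>
    msubst L k \<alpha> (neg_s L n x) = neg_s L k (msubst L k \<alpha> x)"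
  and subst_comp: "subst_sym k n \<alpha> \<Longrightarrow> subst_sym n m \<beta> \<Longrightarrow> x \<in> carr L k \<Longrightarrow>
    msubst L m (map (nth \<beta>) \<alpha>) x = msubst L m \<beta> (msubst L n \<alpha> x)"
  and subst_id: "x \<in> carr L n \<Longrightarrow> msubst L n [0..<n] x = x"
  using fo_axioms unfolding satisfies_axioms_def ax2_def ax3_def ax4_def ax5_def by blast+

lemma ex_bot [simp]: "ex_s L n (bot_s L (Suc n)) = bot_s L n"
  and ex_sup: "x \<in> carr L (Suc n) \<Longrightarrow> y \<in> carr L (Suc n) \<Longrightarrow>
    ex_s L n (sup_s L (Suc n) x y) = sup_s L n (ex_s L n x) (ex_s L n y)"
  and le_cyl_ex: "x \<in> carr L (Suc n) \<Longrightarrow> sort.le (Suc n) x (msubst L (Suc n) (cyl n) (ex_s L n x))"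
  and ex_inf_cyl: "x \<in> carr L (Suc n) \<Longrightarrow> y \<in> carr L n \<Longrightarrow>
    ex_s L n (inf_s L (Suc n) x (msubst L (Suc n) (cyl n) y)) = inf_s L n (ex_s L n x) y"
  using fo_axioms unfolding satisfies_axioms_def ax7_def ax8_def ax9_def le_s_eq_sort_le by blast+

lemma subst_mono: "subst_sym n k \<alpha> \<Longrightarrow> x \<in> carr L n \<Longrightarrow> y \<in> carr L n \<Longrightarrow> sort.le n x y \<Longrightarrow>
    sort.le k (msubst L k \<alpha> x) (msubst L k \<alpha> y)"
  unfolding sort.le_def by (metis subst_inf)

lemma big_inf_Nil [simp]: "big_inf L n [] = top_s L n"
  and big_inf_Cons [simp]: "big_inf L n (x # xs) = inf_s L n x (big_inf L n xs)"
  by (simp_all add: big_inf_def)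

lemma big_inf_append: "set xs \<subseteq> carr L n \<Longrightarrow> set ys \<subseteq> carr L n \<Longrightarrow>
    big_inf L n (xs @ ys) = inf_s L n (big_inf L n xs) (big_inf L n ys)"
  by (induction xs) (auto simp: sort.one_meet sort.meet_assoc)

lemma big_inf_lower: "set xs \<subseteq> carr L n \<Longrightarrow> x \<in> set xs \<Longrightarrow> sort.le n (big_inf L n xs) x"
proof (induction xs)
  case (Cons y xs)
  then show ?case
    by (auto intro: sort.meet_le1 sort.le_trans[OF _ _ _ sort.meet_le2])
qed simp

lemma big_inf_greatest: "set xs \<subseteq> carr L n \<Longrightarrow> y \<in> carr L n \<Longrightarrow> \<forall>x\<in>set xs. sort.le n y x \<Longrightarrow>
    sort.le n y (big_inf L n xs)"
  by (induction xs) (auto simp: sort.le_one sort.le_meet_iff)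

lemma big_inf_antimono: "set xs \<subseteq> carr L n \<Longrightarrow> set ys \<subseteq> set xs \<Longrightarrow>
    sort.le n (big_inf L n xs) (big_inf L n ys)"
  by (intro big_inf_greatest) (auto intro: big_inf_lower)

lemma subst_big_inf: "subst_sym n k \<alpha> \<Longrightarrow> set xs \<subseteq> carr L n \<Longrightarrow>
    msubst L k \<alpha> (big_inf L n xs) = big_inf L k (map (msubst L k \<alpha>) xs)"
  by (induction xs) (auto simp: subst_inf)

text \<open>Both facts about sort 0 are instances of axiom (0): with two blocks of sort 0 and with none.\<close>

lemma sort0_two_valued:
  assumes x: "x \<in> carr L 0"
  shows "x = bot_s L 0 \<or> x = top_s L 0"
proof -
  have cyl0: "part_cyl [0, 0] 0 = []" "part_cyl [0, 0] (Suc 0) = []"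
    by (simp_all add: part_cyl_def)
  have upt2: "[0..<2] = [0, 1::nat]"
    by (simp add: upt_rec)
  have subst0: "msubst L 0 [] y = y" if "y \<in> carr L 0" for y
    using subst_id[OF that] by simp
  have "sup_s L 0 x (neg_s L 0 x) = top_s L 0"
    using x by (rule sort.join_neg)
  then have "le_s L 0 (big_inf L 0 [top_s L 0, top_s L 0]) (big_sup L 0 [x, neg_s L 0 x])"
    using x by (simp add: big_sup_def sort.join_zero sort.meet_one le_s_def)
  then have "\<exists>i<length [0, 0::nat]. le_s L ([0, 0] ! i) ([top_s L 0, top_s L 0] ! i) ([x, neg_s L 0 x] ! i)"
    using axiom0[unfolded ax0_def, rule_format, of "[top_s L 0, top_s L 0]" "[0, 0]" "[x, neg_s L 0 x]"] x
    by (simp add: cyl0 subst0 upt2 less_Suc_eq nth_Cons')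
  then have "sort.le 0 (top_s L 0) x \<or> sort.le 0 (top_s L 0) (neg_s L 0 x)"
    by (auto simp: less_Suc_eq le_s_eq_sort_le)
  then show ?thesis
  proof
    assume "sort.le 0 (top_s L 0) x"
    then show ?thesis
      using x by (simp add: sort.le_def sort.one_meet)
  next
    assume "sort.le 0 (top_s L 0) (neg_s L 0 x)"
    then have "neg_s L 0 x = top_s L 0"
      using x by (simp add: sort.le_def sort.one_meet)
    then show ?thesis
      using sort.meet_neg[OF x] sort.meet_one[OF x] by simp
  qed
qed

lemma sort0_top_neq_bot: "top_s L 0 \<noteq> bot_s L 0"
proof
  assume "top_s L 0 = bot_s L 0"
  then have "le_s L 0 (big_inf L 0 []) (big_sup L 0 [])"
    by (simp add: big_sup_def le_s_def sort.meet_idem)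
  then show False
    using axiom0[unfolded ax0_def, rule_format, of "[]" "[]" "[]"] by simp
qed

lemma ex_nonzero: "x \<in> carr L (Suc n) \<Longrightarrow> x \<noteq> bot_s L (Suc n) \<Longrightarrow> ex_s L n x \<noteq> bot_s L n"
  using le_cyl_ex[of x n] sort.le_zero_iff subst_sym_cyl by fastforce

lemma ex_iter_nonzero: "x \<in> carr L (m + n) \<Longrightarrow> x \<noteq> bot_s L (m + n) \<Longrightarrow> ex_iter L m n x \<noteq> bot_s L m"
proof (induction n arbitrary: x)
  case (Suc n)
  then show ?case
    using ex_nonzero[of x "m + n"] by simp
qed simp

text \<open>The case of a single block in axiom (10).\<close>

lemma ex_subst_append:
  assumes "set \<alpha> \<subseteq> {..<m}" and "x \<in> carr L (Suc (length \<alpha>))"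
  shows "ex_s L m (msubst L (Suc m) (\<alpha> @ [m]) x) = msubst L m \<alpha> (ex_s L (length \<alpha>) x)"
proof -
  have "subst_sym (length \<alpha>) m \<alpha>"
    using assms(1) by (auto simp: subst_sym_def)
  then have "msubst L (Suc m) (\<alpha> @ [m]) x \<in> carr L (Suc m)"
    and "msubst L m \<alpha> (ex_s L (length \<alpha>) x) \<in> carr L m"
    using subst_closed[OF subst_sym_append_last] assms(2) by simp_all
  then show ?thesis
    using axiom10[unfolded ax10_def, rule_format, of "[x]" "[\<alpha>]" m] assms by (simp add: sort.meet_one subset_iff)
qed

end

fun index_of :: "'v list \<Rightarrow> 'v \<Rightarrow> nat" where
  "index_of [] x = 0"
| "index_of (y # ys) x = (if x = y then 0 else Suc (index_of ys x))"

lemma index_of_less: "x \<in> set u \<Longrightarrow> index_of u x < length u"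
  by (induction u) auto

lemma nth_index_of: "x \<in> set u \<Longrightarrow> u ! index_of u x = x"
  by (induction u) auto

lemma index_of_nth: "distinct u \<Longrightarrow> i < length u \<Longrightarrow> index_of u (u ! i) = i"
proof (induction u arbitrary: i)
  case (Cons a u)
  then show ?case
    by (cases i) auto
qed simp

lemma index_of_append: "x \<in> set u \<Longrightarrow> index_of (u @ w) x = index_of u x"
  by (induction u) auto

lemma map_index_of_append: "set ts \<subseteq> set u \<Longrightarrow> map (index_of (u @ w)) ts = map (index_of u) ts"
  by (auto simp: index_of_append)

lemma index_of_append_last: "x \<notin> set u \<Longrightarrow> index_of (u @ [x]) x = length u"
  by (induction u) auto

lemma map_index_of_self: "distinct u \<Longrightarrow> map (index_of u) u = [0..<length u]"
  by (rule nth_equalityI) (auto simp: index_of_nth)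

lemma subst_sym_index_of: "set v \<subseteq> set u \<Longrightarrow> subst_sym (length v) (length u) (map (index_of u) v)"
  by (auto simp: subst_sym_def index_of_less)

text \<open>A pair (v, r) with r of sort length v stands for r applied to the list of parameters v.
  For v whose entries occur in u, read_in L u (v, r) is the same element read in the sort
  length u, each parameter being sent to its position in u.\<close>

definition well_sorted :: "'a msalg \<Rightarrow> 'v list \<times> 'a \<Rightarrow> bool" where
  "well_sorted L p \<longleftrightarrow> snd p \<in> carr L (length (fst p))"

definition params :: "('v list \<times> 'a) list \<Rightarrow> 'v set" where
  "params X = (\<Union>p\<in>set X. set (fst p))"

definition read_in :: "'a msalg \<Rightarrow> 'v list \<Rightarrow> 'v list \<times> 'a \<Rightarrow> 'a" where
  "read_in L u p = msubst L (length u) (map (index_of u) (fst p)) (snd p)"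

definition conj_in :: "'a msalg \<Rightarrow> 'v list \<Rightarrow> ('v list \<times> 'a) list \<Rightarrow> 'a" where
  "conj_in L u X = big_inf L (length u) (map (read_in L u) X)"

definition consistent :: "'a msalg \<Rightarrow> ('v list \<times> 'a) list \<Rightarrow> bool" where
  "consistent L X \<longleftrightarrow>
     (let u = remdups (concat (map fst X)) in conj_in L u X \<noteq> bot_s L (length u))"

lemma params_simps [simp]:
  "params [] = {}" "params (p # X) = set (fst p) \<union> params X" "params (X @ Y) = params X \<union> params Y"
  by (auto simp: params_def)

lemma set_remdups_params: "set (remdups (concat (map fst X))) = params X"
  by (auto simp: params_def)

context fol_algebra
begin

lemma read_in_closed: "well_sorted L p \<Longrightarrow> set (fst p) \<subseteq> set u \<Longrightarrow> read_in L u p \<in> carr L (length u)"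
  by (simp add: read_in_def well_sorted_def subst_closed[OF subst_sym_index_of])

lemma subst_read_in:
  assumes "subst_sym (length u0) (length u) \<gamma>" and "\<forall>x\<in>set (fst p). \<gamma> ! index_of u0 x = index_of u x"
    and "well_sorted L p" and "set (fst p) \<subseteq> set u0"
  shows "msubst L (length u) \<gamma> (read_in L u0 p) = read_in L u p"
proof -
  have pos: "map (nth \<gamma>) (map (index_of u0) (fst p)) = map (index_of u) (fst p)"
    using assms(2) by simp
  have "msubst L (length u) (map (nth \<gamma>) (map (index_of u0) (fst p))) (snd p) =
      msubst L (length u) \<gamma> (read_in L u0 p)"
    unfolding read_in_def
    by (rule subst_comp[OF subst_sym_index_of[OF assms(4)] assms(1)])
      (use assms(3) in \<open>simp add: well_sorted_def\<close>)
  then show ?thesis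
    by (simp only: pos read_in_def)
qed

lemma conj_in_closed:
  "\<forall>p\<in>set X. well_sorted L p \<Longrightarrow> params X \<subseteq> set u \<Longrightarrow> conj_in L u X \<in> carr L (length u)"
  unfolding conj_in_def by (rule big_inf_closed) (auto simp: params_def intro!: read_in_closed)

lemma conj_in_Nil [simp]: "conj_in L u [] = top_s L (length u)"
  and conj_in_Cons: "conj_in L u (p # X) = inf_s L (length u) (read_in L u p) (conj_in L u X)"
  by (simp_all add: conj_in_def)

lemma conj_in_append:
  "\<forall>p\<in>set (X @ Y). well_sorted L p \<Longrightarrow> params (X @ Y) \<subseteq> set u \<Longrightarrow>
    conj_in L u (X @ Y) = inf_s L (length u) (conj_in L u X) (conj_in L u Y)"
  unfolding conj_in_def map_append
  by (rule big_inf_append) (auto simp: params_def intro!: read_in_closed)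

lemma conj_in_antimono:
  "\<forall>p\<in>set X. well_sorted L p \<Longrightarrow> params X \<subseteq> set u \<Longrightarrow> set Y \<subseteq> set X \<Longrightarrow>
    sort.le (length u) (conj_in L u X) (conj_in L u Y)"
  unfolding conj_in_def
  by (rule big_inf_antimono) (auto simp: params_def intro!: read_in_closed)

lemma subst_conj_in:
  assumes wf: "\<forall>p\<in>set X. well_sorted L p" and X: "params X \<subseteq> set u0"
    and \<gamma>: "subst_sym (length u0) (length u) \<gamma>" and pos: "\<forall>x\<in>params X. \<gamma> ! index_of u0 x = index_of u x"
  shows "msubst L (length u) \<gamma> (conj_in L u0 X) = conj_in L u X"
proof -
  have "msubst L (length u) \<gamma> (conj_in L u0 X) =
      big_inf L (length u) (map (msubst L (length u) \<gamma>) (map (read_in L u0) X))"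
    unfolding conj_in_def
    by (rule subst_big_inf[OF \<gamma>]) (use wf X in \<open>auto simp: params_def intro!: read_in_closed\<close>)
  also have "map (msubst L (length u) \<gamma>) (map (read_in L u0) X) = map (read_in L u) X"
    unfolding map_map
    by (rule map_cong[OF refl])
      (use wf X pos in \<open>auto simp: params_def intro!: subst_read_in[OF \<gamma>]\<close>)
  finally show ?thesis
    by (simp only: conj_in_def)
qed

lemma conj_in_same_params:
  assumes X: "\<forall>q\<in>set X. fst q = v \<and> snd q \<in> carr L (length v)" and v: "set v \<subseteq> set u"
  shows "conj_in L u X = msubst L (length u) (map (index_of u) v) (big_inf L (length v) (map snd X))"
proof -
  have "msubst L (length u) (map (index_of u) v) (big_inf L (length v) (map snd X)) =
      big_inf L (length u) (map (msubst L (length u) (map (index_of u) v)) (map snd X))"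
    using subst_big_inf[OF subst_sym_index_of[OF v], of "map snd X"] X by auto
  also have "\<dots> = conj_in L u X"
    unfolding conj_in_def map_map o_def
    using X by (intro arg_cong[where f = "big_inf L (length u)"] map_cong) (auto simp: read_in_def)
  finally show ?thesis
    by simp
qed

end

text \<open>In a representation by A(W), the element \<exists>(1) of sort 0 is true iff W is nonempty;
  the case of the empty domain is treated separately.\<close>

locale fol_algebra_nonempty = fol_algebra +
  assumes ex_top_1: "ex_s L 0 (top_s L 1) = top_s L 0"
begin

lemma ex_top [simp]: "ex_s L n (top_s L (Suc n)) = top_s L n"
proof -
  have "subst_sym 1 (Suc n) [n]" "subst_sym 0 n []"
    by (auto simp: subst_sym_def)
  then show ?thesis
    using ex_subst_append[of "[]" n "top_s L 1"] ex_top_1 by simp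
qed

lemma top_neq_bot: "top_s L n \<noteq> bot_s L n"
  by (induction n) (use sort0_top_neq_bot in \<open>metis ex_top ex_bot\<close>)+

text \<open>An injective substitution has a left inverse (axioms (3), (4)), hence reflects 0.\<close>

lemma subst_nonzero_if_distinct:
  assumes d: "distinct \<alpha>" and \<alpha>: "subst_sym n k \<alpha>" and x: "x \<in> carr L n" and nz: "x \<noteq> bot_s L n"
  shows "msubst L k \<alpha> x \<noteq> bot_s L k"
proof (cases "n = 0")
  case True
  then have "\<alpha> = []" and "x = top_s L 0"
    using \<alpha> sort0_two_valued[of x] x nz by (auto simp: subst_sym_def)
  then show ?thesis
    using \<alpha> True top_neq_bot by simp
next
  case False
  define \<beta> where "\<beta> = map (\<lambda>j. if j \<in> set \<alpha> then index_of \<alpha> j else 0) [0..<k]"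
  have len: "length \<alpha> = n" and lt: "\<forall>j\<in>set \<alpha>. j < k"
    using \<alpha> by (auto simp: subst_sym_def)
  have \<beta>: "subst_sym k n \<beta>"
    using False len by (auto simp: subst_sym_def \<beta>_def index_of_less)
  have "map (nth \<beta>) \<alpha> = map (index_of \<alpha>) \<alpha>"
    using lt by (auto simp: \<beta>_def)
  also have "\<dots> = [0..<n]"
    using map_index_of_self[OF d] len by simp
  finally have "msubst L n \<beta> (msubst L k \<alpha> x) = x"
    using subst_comp[OF \<alpha> \<beta> x] subst_id[OF x] by simp
  then show ?thesis
    using \<beta> nz by auto
qed

lemma conj_in_eq_bot_iff_extend:
  assumes wf: "\<forall>p\<in>set X. well_sorted L p" and d: "distinct u" "distinct u'" and X: "params X \<subseteq> set u"
    and uu': "set u \<subseteq> set u'"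
  shows "conj_in L u' X = bot_s L (length u') \<longleftrightarrow> conj_in L u X = bot_s L (length u)"
proof -
  define \<gamma> where "\<gamma> = map (index_of u') u"
  have \<gamma>: "subst_sym (length u) (length u') \<gamma>"
    unfolding \<gamma>_def using subst_sym_index_of[OF uu'] by simp
  have "distinct \<gamma>"
    unfolding \<gamma>_def using d uu' by (simp add: distinct_map inj_on_def) (metis nth_index_of subsetD)
  moreover have "msubst L (length u') \<gamma> (conj_in L u X) = conj_in L u' X"
    using X by (intro subst_conj_in[OF wf X \<gamma>]) (auto simp: \<gamma>_def index_of_less nth_index_of)
  ultimately show ?thesis
    using subst_nonzero_if_distinct[OF _ \<gamma> conj_in_closed[OF wf X]] \<gamma> by auto
qed

lemma consistent_iff:
  assumes wf: "\<forall>p\<in>set X. well_sorted L p" and d: "distinct u" and X: "params X \<subseteq> set u"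
  shows "consistent L X \<longleftrightarrow> conj_in L u X \<noteq> bot_s L (length u)"
  unfolding consistent_def Let_def
  using conj_in_eq_bot_iff_extend[OF wf distinct_remdups d, of "concat (map fst X)"] X
    set_remdups_params[of X]
  by simp

lemma consistent_Nil: "consistent L []"
  by (simp add: consistent_def top_neq_bot)

lemma consistent_subset:
  assumes wf: "\<forall>p\<in>set X. well_sorted L p" and YX: "set Y \<subseteq> set X" and X: "consistent L X"
  shows "consistent L Y"
proof -
  define u where "u = remdups (concat (map fst X))"
  have uX: "params X \<subseteq> set u" and uY: "params Y \<subseteq> set u"
    using YX by (auto simp: u_def params_def)
  have wfY: "\<forall>p\<in>set Y. well_sorted L p"
    using wf YX by auto
  have "conj_in L u X \<noteq> bot_s L (length u)"
    using X consistent_iff[OF wf _ uX] by (simp add: u_def)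
  then have "conj_in L u Y \<noteq> bot_s L (length u)"
    using sort.nonzero_if_le[OF conj_in_closed[OF wf uX] conj_in_closed[OF wfY uY]
        conj_in_antimono[OF wf uX YX]] by blast
  then show ?thesis
    using consistent_iff[OF wfY _ uY] by (simp add: u_def)
qed

end

text \<open>Eps \<psi> ts names a witness y for \<exists>y. \<psi>(ts, y); these terms are the elements of the
  canonical model.\<close>

datatype 'a eps_term = Eps 'a "'a eps_term list"

lemma size_less_Eps: "s \<in> set ts \<Longrightarrow> size s < size (Eps \<psi> ts)"
proof -
  have "s \<in> set ts \<Longrightarrow> size s < size_list size ts + 1" for ts :: "'a eps_term list"
    by (induction ts) auto
  then show "s \<in> set ts \<Longrightarrow> size s < size (Eps \<psi> ts)"
    by simp
qed

fun well_sorted_term :: "'a msalg \<Rightarrow> 'a eps_term \<Rightarrow> bool" where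
  "well_sorted_term L (Eps \<psi> ts) \<longleftrightarrow> \<psi> \<in> carr L (Suc (length ts))"

text \<open>The Henkin axiom \<exists>y. \<psi>(x, y) \<longrightarrow> \<psi>(x, y) as an element of sort k + 1.\<close>

definition henkin_axiom :: "'a msalg \<Rightarrow> nat \<Rightarrow> 'a \<Rightarrow> 'a" where
  "henkin_axiom L k \<psi> = sup_s L (Suc k) (neg_s L (Suc k) (msubst L (Suc k) (cyl k) (ex_s L k \<psi>))) \<psi>"

fun henkin_instance :: "'a msalg \<Rightarrow> 'a eps_term \<Rightarrow> 'a eps_term list \<times> 'a" where
  "henkin_instance L (Eps \<psi> ts) = (ts @ [Eps \<psi> ts], henkin_axiom L (length ts) \<psi>)"

definition henkin_set :: "'a msalg \<Rightarrow> ('a eps_term list \<times> 'a) set" where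
  "henkin_set L = henkin_instance L ` Collect (well_sorted_term L)"

lemma henkin_instance_inj: "henkin_instance L s = henkin_instance L t \<Longrightarrow> s = t"
  by (cases s; cases t) auto

context fol_algebra
begin

lemma henkin_axiom_closed: "\<psi> \<in> carr L (Suc k) \<Longrightarrow> henkin_axiom L k \<psi> \<in> carr L (Suc k)"
  by (simp add: henkin_axiom_def subst_closed[OF subst_sym_cyl])

lemma well_sorted_henkin_instance: "well_sorted_term L t \<Longrightarrow> well_sorted L (henkin_instance L t)"
  by (cases t) (simp add: well_sorted_def henkin_axiom_closed)

lemma henkin_set_well_sorted: "p \<in> henkin_set L \<Longrightarrow> well_sorted L p"
  by (auto simp: henkin_set_def well_sorted_henkin_instance)

end

context fol_algebra_nonempty
begin

text \<open>The Henkin axiom for a new witness, read in any context, is conservative: it is true of some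
  value of the new variable, so it is disjoint from no nonzero element of the old sort.\<close>

lemma henkin_axiom_conservative:
  assumes \<phi>: "\<phi> \<in> carr L N" and nz: "\<phi> \<noteq> bot_s L N" and \<psi>: "\<psi> \<in> carr L (Suc k)"
    and \<alpha>: "subst_sym k N \<alpha>"
  shows "inf_s L (Suc N) (msubst L (Suc N) (\<alpha> @ [N]) (henkin_axiom L k \<psi>))
    (msubst L (Suc N) (cyl N) \<phi>) \<noteq> bot_s L (Suc N)"
proof -
  have len: "length \<alpha> = k" and lt: "set \<alpha> \<subseteq> {..<N}"
    using \<alpha> by (auto simp: subst_sym_def)
  have \<alpha>': "subst_sym (Suc k) (Suc N) (\<alpha> @ [N])"
    using \<alpha> by (rule subst_sym_append_last)
  define a where "a = msubst L N \<alpha> (ex_s L k \<psi>)"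
  define b where "b = msubst L (Suc N) (\<alpha> @ [N]) \<psi>"
  define h where "h = msubst L (Suc N) (\<alpha> @ [N]) (henkin_axiom L k \<psi>)"
  have a: "a \<in> carr L N" and b: "b \<in> carr L (Suc N)" and h: "h \<in> carr L (Suc N)"
    using \<alpha> \<alpha>' \<psi> by (simp_all add: a_def b_def h_def henkin_axiom_closed)
  have "msubst L (Suc N) (\<alpha> @ [N]) (msubst L (Suc k) (cyl k) (ex_s L k \<psi>)) = msubst L (Suc N) (cyl N) a"
    using subst_comp[OF subst_sym_cyl \<alpha>'] subst_comp[OF \<alpha> subst_sym_cyl] \<psi>
    by (simp add: a_def map_nth_cyl_append[OF len] map_nth_cyl_id[OF lt])
  then have h_eq: "h = sup_s L (Suc N) (msubst L (Suc N) (cyl N) (neg_s L N a)) b"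
    unfolding h_def henkin_axiom_def b_def
    using \<psi> \<alpha>' a by (simp add: subst_sup subst_neg subst_closed[OF subst_sym_cyl] subst_sym_cyl)
  have "ex_s L N (msubst L (Suc N) (cyl N) (neg_s L N a)) = neg_s L N a"
    using ex_inf_cyl[of "top_s L (Suc N)" N "neg_s L N a"] a
    by (simp add: sort.one_meet subst_closed[OF subst_sym_cyl])
  moreover have "ex_s L N b = a"
    unfolding a_def b_def using ex_subst_append[of \<alpha> N \<psi>] lt \<psi> len by simp
  ultimately have "ex_s L N h = top_s L N"
    using h_eq ex_sup a b by (simp add: sort.join_comm[of "neg_s L N a"] sort.join_neg subst_closed[OF subst_sym_cyl])
  then have "ex_s L N (inf_s L (Suc N) h (msubst L (Suc N) (cyl N) \<phi>)) = \<phi>"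
    using ex_inf_cyl[OF h \<phi>] \<phi> by (simp add: sort.one_meet)
  then show ?thesis
    unfolding h_def[symmetric] using nz by auto
qed

lemma consistent_henkin_instance_Cons:
  assumes X: "set X \<subseteq> henkin_set L" "consistent L X" and t: "t = Eps \<psi> ts" "well_sorted_term L t"
    and fresh: "t \<notin> set ts" "t \<notin> params X"
  shows "consistent L (henkin_instance L t # X)"
proof -
  define u0 where "u0 = remdups (concat (map fst X) @ ts)"
  define N where "N = length u0"
  define u where "u = u0 @ [t]"
  define \<alpha> where "\<alpha> = map (index_of u0) ts"
  have wf: "\<forall>p\<in>set X. well_sorted L p"
    using X(1) henkin_set_well_sorted by blast
  have \<psi>: "\<psi> \<in> carr L (Suc (length ts))"
    using t by simp
  have u0X: "params X \<subseteq> set u0" and t_u0: "t \<notin> set u0"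
    using fresh by (auto simp: u0_def params_def)
  have u: "distinct u" "length u = Suc N" and uX: "params X \<subseteq> set u"
    using t_u0 u0X by (auto simp: u_def N_def u0_def)
  have X_nz: "conj_in L u0 X \<noteq> bot_s L N"
    using X(2) consistent_iff[OF wf _ u0X] by (simp add: N_def u0_def)
  have "\<forall>x\<in>params X. cyl N ! index_of u0 x = index_of u x"
    using u0X by (auto simp: cyl_def N_def u_def index_of_less index_of_append)
  then have "msubst L (Suc N) (cyl N) (conj_in L u0 X) = conj_in L u X"
    using subst_conj_in[OF wf u0X, of u "cyl N"] subst_sym_cyl[of N] u(2) by (simp add: N_def)
  moreover have "read_in L u (henkin_instance L t) = msubst L (Suc N) (\<alpha> @ [N]) (henkin_axiom L (length ts) \<psi>)"
  proof -
    have "map (index_of u) ts = \<alpha>"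
      using map_index_of_append[of ts u0 "[t]"] by (simp add: u_def \<alpha>_def u0_def)
    moreover have "index_of u t = N"
      using index_of_append_last[OF t_u0] by (simp only: u_def N_def)
    ultimately show ?thesis
      using t(1) u(2) by (simp add: read_in_def)
  qed
  moreover have "subst_sym (length ts) N \<alpha>"
    using subst_sym_index_of[of ts u0] by (simp add: \<alpha>_def N_def u0_def)
  ultimately have "conj_in L u (henkin_instance L t # X) \<noteq> bot_s L (length u)"
    using henkin_axiom_conservative[OF conj_in_closed[OF wf u0X] X_nz[unfolded N_def] \<psi>] u(2)
    by (simp add: conj_in_Cons N_def)
  moreover have "params (henkin_instance L t # X) \<subseteq> set u"
    using uX t(1) by (auto simp: u_def u0_def)
  ultimately show ?thesis
    using consistent_iff[OF _ u(1)] wf well_sorted_henkin_instance[OF t(2)] by simp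
qed

text \<open>A witness of maximal size among the instances in X cannot occur in the other instances.\<close>

lemma fresh_henkin_instance:
  assumes X: "set X \<subseteq> henkin_set L" "X \<noteq> []"
  obtains \<psi> ts where "well_sorted_term L (Eps \<psi> ts)" and "henkin_instance L (Eps \<psi> ts) \<in> set X"
    and "Eps \<psi> ts \<notin> set ts" and "Eps \<psi> ts \<notin> params (filter (\<lambda>p. p \<noteq> henkin_instance L (Eps \<psi> ts)) X)"
proof -
  define S where "S = {s. well_sorted_term L s \<and> henkin_instance L s \<in> set X}"
  have "finite S"
    using finite_imageD[of "henkin_instance L" S] finite_subset[of "henkin_instance L ` S" "set X"]
      henkin_instance_inj by (auto simp: S_def inj_on_def)
  moreover have "S \<noteq> {}"
  proof -
    obtain p where "p \<in> set X"
      using X(2) by (cases X) auto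
    then show ?thesis
      using X(1) by (auto simp: S_def henkin_set_def)
  qed
  ultimately obtain t where tS: "t \<in> S" and t_max: "\<forall>s\<in>S. size s \<le> size t"
    using Max_in[of "size ` S"] Max_ge[of "size ` S"] by fastforce
  obtain \<psi> ts where t: "t = Eps \<psi> ts"
    by (cases t)
  have "t \<notin> params (filter (\<lambda>p. p \<noteq> henkin_instance L t) X)"
  proof
    assume "t \<in> params (filter (\<lambda>p. p \<noteq> henkin_instance L t) X)"
    then obtain p where p: "p \<in> set X" "p \<noteq> henkin_instance L t" "t \<in> set (fst p)"
      by (auto simp: params_def)
    then obtain s where "p = henkin_instance L s" "well_sorted_term L s"
      using X(1) by (auto simp: henkin_set_def)
    then have "s \<in> S" "s \<noteq> t" "t \<in> set (fst (henkin_instance L s))"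
      using p by (auto simp: S_def)
    moreover obtain \<psi>' ts' where "s = Eps \<psi>' ts'"
      by (cases s)
    ultimately show False
      using t_max size_less_Eps[of t ts' \<psi>'] by auto
  qed
  moreover have "t \<notin> set ts"
    using size_less_Eps[of t ts \<psi>] t by auto
  ultimately show ?thesis
    using that tS t by (auto simp: S_def)
qed

lemma consistent_henkin_set: "set X \<subseteq> henkin_set L \<Longrightarrow> consistent L X"
proof (induction "card (set X)" arbitrary: X rule: less_induct)
  case less
  show ?case
  proof (cases "X = []")
    case True
    then show ?thesis
      by (simp add: consistent_Nil)
  next
    case False
    then obtain \<psi> ts where t: "well_sorted_term L (Eps \<psi> ts)" "henkin_instance L (Eps \<psi> ts) \<in> set X"
      and fresh: "Eps \<psi> ts \<notin> set ts" "Eps \<psi> ts \<notin> params (filter (\<lambda>p. p \<noteq> henkin_instance L (Eps \<psi> ts)) X)"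
      using fresh_henkin_instance[OF less.prems] by metis
    define X' where "X' = filter (\<lambda>p. p \<noteq> henkin_instance L (Eps \<psi> ts)) X"
    have X'X: "set X' = set X - {henkin_instance L (Eps \<psi> ts)}"
      by (auto simp: X'_def)
    have X'H: "set X' \<subseteq> henkin_set L"
      using less.prems X'X by auto
    have "card (set X') < card (set X)"
      unfolding X'X using t(2) by (intro card_Diff1_less) auto
    then have "consistent L X'"
      using less.hyps X'H by blast
    then have "consistent L (henkin_instance L (Eps \<psi> ts) # X')"
      using consistent_henkin_instance_Cons[OF X'H _ refl t(1) fresh(1)] fresh(2) by (simp add: X'_def)
    moreover have "set X \<subseteq> set (henkin_instance L (Eps \<psi> ts) # X')"
      using X'X by auto
    moreover have "\<forall>p\<in>set (henkin_instance L (Eps \<psi> ts) # X'). well_sorted L p"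
      using X'H henkin_set_well_sorted well_sorted_henkin_instance[OF t(1)]
      by (auto simp del: henkin_instance.simps)
    ultimately show ?thesis
      using consistent_subset by blast
  qed
qed

end

locale maximal_consistent = fol_algebra_nonempty +
  fixes M :: "('a eps_term list \<times> 'a) set"
  assumes henkin_subset: "henkin_set L \<subseteq> M"
    and well_sorted_M: "p \<in> M \<Longrightarrow> well_sorted L p"
    and consistent_M: "set X \<subseteq> M \<Longrightarrow> consistent L X"
    and maximal_M: "M \<subseteq> S \<Longrightarrow> (\<And>p. p \<in> S \<Longrightarrow> well_sorted L p) \<Longrightarrow>
      (\<And>X. set X \<subseteq> S \<Longrightarrow> consistent L X) \<Longrightarrow> S = M"
begin

lemma inconsistent_Cons_if_not_mem:
  assumes p: "well_sorted L p" "p \<notin> M"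
  obtains X where "set X \<subseteq> M" "\<not> consistent L (p # X)"
proof -
  have "\<exists>X. set X \<subseteq> M \<and> \<not> consistent L (p # X)"
  proof (rule ccontr)
    assume cons: "\<not> (\<exists>X. set X \<subseteq> M \<and> \<not> consistent L (p # X))"
    have "insert p M = M"
    proof (rule maximal_M)
      show "well_sorted L q" if "q \<in> insert p M" for q
        using that p(1) well_sorted_M by blast
      show "consistent L Y" if Y: "set Y \<subseteq> insert p M" for Y
      proof (rule consistent_subset)
        have "set (filter (\<lambda>q. q \<noteq> p) Y) \<subseteq> M"
          using Y by auto
        then show "consistent L (p # filter (\<lambda>q. q \<noteq> p) Y)"
          using cons by blast
      qed (use Y p in \<open>auto intro: well_sorted_M\<close>)
    qed auto
    then show False
      using p by auto
  qed
  then show ?thesis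
    using that by blast
qed

lemma conj_in_nonzero: "set X \<subseteq> M \<Longrightarrow> distinct u \<Longrightarrow> params X \<subseteq> set u \<Longrightarrow>
    conj_in L u X \<noteq> bot_s L (length u)"
  using consistent_iff consistent_M well_sorted_M by blast

lemma mem_or_neg_mem:
  assumes r: "r \<in> carr L (length v)"
  shows "(v, r) \<in> M \<or> (v, neg_s L (length v) r) \<in> M"
proof (rule ccontr)
  assume "\<not> ?thesis"
  then obtain X1 X2 where X1: "set X1 \<subseteq> M" "\<not> consistent L ((v, r) # X1)"
    and X2: "set X2 \<subseteq> M" "\<not> consistent L ((v, neg_s L (length v) r) # X2)"
    using inconsistent_Cons_if_not_mem r by (metis fst_conv neg_closed snd_conv well_sorted_def)
  define u where "u = remdups (v @ concat (map fst (X1 @ X2)))"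
  define a where "a = read_in L u (v, r)"
  have u: "distinct u" "set v \<subseteq> set u" "params X1 \<subseteq> set u" "params X2 \<subseteq> set u"
    by (auto simp: u_def params_def)
  have wf1: "\<forall>p\<in>set X1. well_sorted L p" and wf2: "\<forall>p\<in>set X2. well_sorted L p"
    using X1 X2 well_sorted_M by auto
  have a: "a \<in> carr L (length u)"
    unfolding a_def using r u(2) by (simp add: read_in_closed well_sorted_def)
  have "read_in L u (v, neg_s L (length v) r) = neg_s L (length u) a"
    using subst_neg[OF subst_sym_index_of[OF u(2)] r] by (simp add: a_def read_in_def)
  then have "inf_s L (length u) a (conj_in L u X1) = bot_s L (length u)"
    and "inf_s L (length u) (neg_s L (length u) a) (conj_in L u X2) = bot_s L (length u)"
    using X1(2) X2(2) consistent_iff[OF _ u(1)] wf1 wf2 u r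
    by (auto simp: conj_in_Cons a_def well_sorted_def)
  then have "inf_s L (length u) (conj_in L u X1) (conj_in L u X2) = bot_s L (length u)"
    by (rule sort.meet_eq_zero_by_cases[OF conj_in_closed[OF wf1 u(3)] conj_in_closed[OF wf2 u(4)] a])
  moreover have "conj_in L u (X1 @ X2) = inf_s L (length u) (conj_in L u X1) (conj_in L u X2)"
    using wf1 wf2 u by (intro conj_in_append) auto
  ultimately show False
    using conj_in_nonzero[of "X1 @ X2" u] X1(1) X2(1) u by auto
qed

lemma mem_if_entailed:
  assumes X: "set X \<subseteq> M" and u: "distinct u" "params X \<subseteq> set u" "set v \<subseteq> set u"
    and r: "r \<in> carr L (length v)" and le: "sort.le (length u) (conj_in L u X) (read_in L u (v, r))"
  shows "(v, r) \<in> M"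
proof (rule ccontr)
  assume "(v, r) \<notin> M"
  then have neg: "(v, neg_s L (length v) r) \<in> M"
    using mem_or_neg_mem[OF r] by simp
  have wf: "\<forall>p\<in>set X. well_sorted L p"
    using X well_sorted_M by auto
  have ru: "read_in L u (v, r) \<in> carr L (length u)"
    using r u(3) by (simp add: read_in_closed well_sorted_def)
  have "conj_in L u ((v, neg_s L (length v) r) # X) =
      inf_s L (length u) (neg_s L (length u) (read_in L u (v, r))) (conj_in L u X)"
    using subst_neg[OF subst_sym_index_of[OF u(3)] r] by (simp add: conj_in_Cons read_in_def)
  also have "\<dots> = bot_s L (length u)"
    using le sort.le_iff_meet_neg_eq_zero[OF conj_in_closed[OF wf u(2)] ru]
      sort.meet_comm[OF conj_in_closed[OF wf u(2)] sort.neg_closed[OF ru]] by simp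
  finally show False
    using conj_in_nonzero[of "(v, neg_s L (length v) r) # X" u] X neg u by auto
qed

lemma mem_if_big_inf_le:
  assumes X: "set X \<subseteq> M" "\<forall>q\<in>set X. fst q = v \<and> snd q \<in> carr L (length v)"
    and r: "r \<in> carr L (length v)" and le: "sort.le (length v) (big_inf L (length v) (map snd X)) r"
  shows "(v, r) \<in> M"
proof (rule mem_if_entailed[OF X(1) distinct_remdups _ _ r])
  have "big_inf L (length v) (map snd X) \<in> carr L (length v)"
    using X(2) by (intro big_inf_closed) auto
  then show "sort.le (length (remdups v)) (conj_in L (remdups v) X) (read_in L (remdups v) (v, r))"
    using subst_mono[OF subst_sym_index_of[of v "remdups v"] _ r le] conj_in_same_params[OF X(2)]
    by (simp add: read_in_def)
qed (use X(2) in \<open>auto simp: params_def\<close>)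

lemma big_inf_nonzero:
  assumes X: "set X \<subseteq> M" "\<forall>q\<in>set X. fst q = v \<and> snd q \<in> carr L (length v)"
  shows "big_inf L (length v) (map snd X) \<noteq> bot_s L (length v)"
proof
  assume "big_inf L (length v) (map snd X) = bot_s L (length v)"
  then have "conj_in L (remdups v) X = bot_s L (length (remdups v))"
    using conj_in_same_params[OF X(2), of "remdups v"] subst_sym_index_of[of v "remdups v"] by simp
  then show False
    using conj_in_nonzero[OF X(1) distinct_remdups] X(2) by (auto simp: params_def)
qed

end

lemma is_hom_carr_update: "is_hom h L (M\<lparr>carr := S\<rparr>) \<longleftrightarrow> is_hom h L M"
  by (simp add: is_hom_def)

lemma iso_to_subalg_of_fo_if_inj_hom:
  assumes "is_msalg L" and hom: "is_hom h L (fo_alg W)"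
    and into: "\<And>n. h n ` carr L n \<subseteq> Pow (tuples W n)" and inj: "\<And>n. inj_on (h n) (carr L n)"
  shows "iso_to_subalg_of_fo L W"
proof -
  interpret ms_algebra L
    by (rule ms_algebra.intro) fact
  define S where "S n = h n ` carr L n" for n
  have h_S: "x \<in> carr L n \<Longrightarrow> h n x \<in> S n" for n x
    by (simp add: S_def)
  have "subalgebra S (fo_alg W)"
    unfolding subalgebra_def
  proof (intro conjI allI impI ballI)
    fix n
    show "S n \<subseteq> carr (fo_alg W) n"
      using into by (simp add: S_def fo_alg_def)
    show "bot_s (fo_alg W) n \<in> S n" "top_s (fo_alg W) n \<in> S n"
      using hom h_S[OF bot_closed] h_S[OF top_closed] by (simp_all add: is_hom_def)
    fix x y
    assume "x \<in> S n" "y \<in> S n"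
    then obtain r s where r: "r \<in> carr L n" "x = h n r" and s: "s \<in> carr L n" "y = h n s"
      by (auto simp: S_def)
    show "sup_s (fo_alg W) n x y \<in> S n" "inf_s (fo_alg W) n x y \<in> S n"
      using hom h_S[OF sup_closed[OF r(1) s(1)]] h_S[OF inf_closed[OF r(1) s(1)]] r s
      by (simp_all add: is_hom_def)
    show "neg_s (fo_alg W) n x \<in> S n"
      using hom h_S[OF neg_closed[OF r(1)]] r by (simp add: is_hom_def)
  next
    fix n x
    assume "x \<in> S (Suc n)"
    then obtain r where "r \<in> carr L (Suc n)" "x = h (Suc n) r"
      by (auto simp: S_def)
    then show "ex_s (fo_alg W) n x \<in> S n"
      using hom h_S[OF ex_closed] by (simp add: is_hom_def)
  next
    fix n k \<alpha> x
    assume \<alpha>: "subst_sym n k \<alpha>" and "x \<in> S n"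
    then obtain r where "r \<in> carr L n" "x = h n r"
      by (auto simp: S_def)
    then show "msubst (fo_alg W) k \<alpha> x \<in> S k"
      using hom h_S[OF subst_closed[OF \<alpha>]] \<alpha> by (simp add: is_hom_def)
  qed
  moreover have "bij_betw (h n) (carr L n) (carr ((fo_alg W)\<lparr>carr := S\<rparr>) n)" for n
    using inj by (simp add: bij_betw_def S_def)
  ultimately show ?thesis
    using hom unfolding iso_to_subalg_of_fo_def is_iso_def is_hom_carr_update by blast
qed

lemma inj_hom_if_iso_to_subalg_of_fo:
  assumes "iso_to_subalg_of_fo L W"
  obtains h where "is_hom h L (fo_alg W)" and "\<And>n. inj_on (h n) (carr L n)"
    and "\<And>n x. x \<in> carr L n \<Longrightarrow> h n x \<subseteq> tuples W n"
proof -
  obtain S h where S: "subalgebra S (fo_alg W)" and h: "\<And>n. bij_betw (h n) (carr L n) (S n)"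
    and hom: "is_hom h L (fo_alg W)"
    using assms unfolding iso_to_subalg_of_fo_def is_iso_def is_hom_carr_update by auto
  have "h n x \<subseteq> tuples W n" if "x \<in> carr L n" for n x
  proof -
    have "h n x \<in> S n"
      using h[of n] that by (auto simp: bij_betw_def)
    moreover have "S n \<subseteq> Pow (tuples W n)"
      using S by (simp add: subalgebra_def fo_alg_def)
    ultimately show ?thesis
      by blast
  qed
  moreover have "inj_on (h n) (carr L n)" for n
    using h[of n] by (simp add: bij_betw_def)
  ultimately show ?thesis
    using hom that by blast
qed

context maximal_consistent
begin

lemma top_mem: "(v, top_s L (length v)) \<in> M"
  by (rule mem_if_big_inf_le[of "[]"]) (simp_all add: sort.le_refl)

lemma bot_not_mem: "(v, bot_s L (length v)) \<notin> M"
  using big_inf_nonzero[of "[(v, bot_s L (length v))]" v] by (auto simp: sort.meet_one)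

lemma mem_mono:
  "r \<in> carr L (length v) \<Longrightarrow> s \<in> carr L (length v) \<Longrightarrow> sort.le (length v) r s \<Longrightarrow> (v, r) \<in> M \<Longrightarrow>
    (v, s) \<in> M"
  using mem_if_big_inf_le[of "[(v, r)]" v s] by (simp add: sort.meet_one)

lemma inf_mem_iff:
  assumes r: "r \<in> carr L (length v)" and s: "s \<in> carr L (length v)"
  shows "(v, inf_s L (length v) r s) \<in> M \<longleftrightarrow> (v, r) \<in> M \<and> (v, s) \<in> M"
proof
  assume rs: "(v, inf_s L (length v) r s) \<in> M"
  show "(v, r) \<in> M \<and> (v, s) \<in> M"
    using mem_mono[OF _ r sort.meet_le1[OF r s] rs] mem_mono[OF _ s sort.meet_le2[OF r s] rs] r s
    by simp
next
  assume "(v, r) \<in> M \<and> (v, s) \<in> M"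
  moreover have "sort.le (length v) (big_inf L (length v) [r, s]) (inf_s L (length v) r s)"
    using r s by (simp add: sort.meet_one sort.le_refl)
  ultimately show "(v, inf_s L (length v) r s) \<in> M"
    using mem_if_big_inf_le[of "[(v, r), (v, s)]" v "inf_s L (length v) r s"] r s by simp
qed

lemma neg_mem_iff:
  assumes r: "r \<in> carr L (length v)"
  shows "(v, neg_s L (length v) r) \<in> M \<longleftrightarrow> (v, r) \<notin> M"
proof
  assume "(v, neg_s L (length v) r) \<in> M"
  then show "(v, r) \<notin> M"
    using big_inf_nonzero[of "[(v, r), (v, neg_s L (length v) r)]" v] r
    by (auto simp: sort.meet_one sort.meet_neg)
qed (use mem_or_neg_mem[OF r] in blast)

lemma sup_mem_iff:
  assumes r: "r \<in> carr L (length v)" and s: "s \<in> carr L (length v)"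
  shows "(v, sup_s L (length v) r s) \<in> M \<longleftrightarrow> (v, r) \<in> M \<or> (v, s) \<in> M"
proof
  assume rs: "(v, sup_s L (length v) r s) \<in> M"
  show "(v, r) \<in> M \<or> (v, s) \<in> M"
  proof (rule ccontr)
    assume "\<not> ?thesis"
    then have "(v, inf_s L (length v) (neg_s L (length v) r) (neg_s L (length v) s)) \<in> M"
      using inf_mem_iff neg_mem_iff r s by simp
    then show False
      using big_inf_nonzero[of "[(v, sup_s L (length v) r s),
          (v, inf_s L (length v) (neg_s L (length v) r) (neg_s L (length v) s))]" v] rs r s
      by (simp add: sort.meet_one sort.meet_join_neg_neg)
  qed
next
  assume "(v, r) \<in> M \<or> (v, s) \<in> M"
  then show "(v, sup_s L (length v) r s) \<in> M"
    using mem_mono[OF r _ sort.le_join1[OF r s]] mem_mono[OF s _ sort.le_join2[OF r s]] r s by auto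
qed

lemma subst_mem_iff:
  assumes \<alpha>: "subst_sym n (length v) \<alpha>" and r: "r \<in> carr L n"
  shows "(v, msubst L (length v) \<alpha> r) \<in> M \<longleftrightarrow> (map (nth v) \<alpha>, r) \<in> M"
proof -
  define u where "u = remdups v"
  have u: "distinct u" "set v \<subseteq> set u" and \<alpha>v: "set (map (nth v) \<alpha>) \<subseteq> set u"
    using \<alpha> by (auto simp: u_def subst_sym_def)
  have len: "length (map (nth v) \<alpha>) = n"
    using \<alpha> by (simp add: subst_sym_def)
  have "read_in L u (v, msubst L (length v) \<alpha> r) =
      msubst L (length u) (map (index_of u) v) (msubst L (length v) \<alpha> r)"
    by (simp add: read_in_def)
  also have "\<dots> = msubst L (length u) (map (nth (map (index_of u) v)) \<alpha>) r"
    using subst_comp[OF \<alpha> subst_sym_index_of[OF u(2)] r] by (rule sym)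
  also have "map (nth (map (index_of u) v)) \<alpha> = map (index_of u) (map (nth v) \<alpha>)"
    using \<alpha> by (auto simp: subst_sym_def)
  finally have same: "read_in L u (v, msubst L (length v) \<alpha> r) = read_in L u (map (nth v) \<alpha>, r)"
    by (simp add: read_in_def)
  have "read_in L u (v, msubst L (length v) \<alpha> r) \<in> carr L (length u)"
    using \<alpha> r u(2) by (simp add: read_in_closed well_sorted_def)
  then have le: "sort.le (length u) (conj_in L u [p]) (read_in L u q)"
    if "p \<in> {(v, msubst L (length v) \<alpha> r), (map (nth v) \<alpha>, r)}"
      and "q \<in> {(v, msubst L (length v) \<alpha> r), (map (nth v) \<alpha>, r)}" for p q
    using that same by (auto simp: conj_in_Cons sort.meet_one sort.le_refl)
  show ?thesis
  proof
    assume "(v, msubst L (length v) \<alpha> r) \<in> M"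
    then show "(map (nth v) \<alpha>, r) \<in> M"
      using mem_if_entailed[where X = "[(v, msubst L (length v) \<alpha> r)]" and u = u
          and v = "map (nth v) \<alpha>" and r = r] le u r len \<alpha>v by simp
  next
    assume "(map (nth v) \<alpha>, r) \<in> M"
    then show "(v, msubst L (length v) \<alpha> r) \<in> M"
      using mem_if_entailed[where X = "[(map (nth v) \<alpha>, r)]" and u = u
          and v = v and r = "msubst L (length v) \<alpha> r"] le u r \<alpha> \<alpha>v by simp
  qed
qed

text \<open>The Henkin instance of Eps r v provides the witness.\<close>

lemma ex_mem_iff:
  assumes r: "r \<in> carr L (Suc (length v))"
  shows "(v, ex_s L (length v) r) \<in> M \<longleftrightarrow> (\<exists>w. (v @ [w], r) \<in> M)"
proof
  assume ex: "(v, ex_s L (length v) r) \<in> M"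
  define w where "w = Eps r v"
  define c where "c = msubst L (Suc (length v)) (cyl (length v)) (ex_s L (length v) r)"
  have c: "c \<in> carr L (Suc (length v))"
    using r by (simp add: c_def subst_closed[OF subst_sym_cyl])
  have "henkin_instance L w \<in> henkin_set L"
    unfolding henkin_set_def w_def by (rule imageI) (use r in simp)
  then have "henkin_instance L w \<in> M"
    using henkin_subset by blast
  then have "(v @ [w], sup_s L (Suc (length v)) (neg_s L (Suc (length v)) c) r) \<in> M"
    by (simp add: w_def c_def henkin_axiom_def)
  moreover have "(v @ [w], c) \<in> M"
    using subst_mem_iff[of "length v" "v @ [w]" "cyl (length v)" "ex_s L (length v) r"] subst_sym_cyl
      ex r by (simp add: c_def map_nth_cyl_append)
  ultimately have "(v @ [w], r) \<in> M"
    using sup_mem_iff[of "neg_s L (Suc (length v)) c" "v @ [w]" r] neg_mem_iff[of c "v @ [w]"] c r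
    by simp
  then show "\<exists>w. (v @ [w], r) \<in> M" ..
next
  assume "\<exists>w. (v @ [w], r) \<in> M"
  then obtain w where w: "(v @ [w], r) \<in> M" ..
  have "(v @ [w], msubst L (Suc (length v)) (cyl (length v)) (ex_s L (length v) r)) \<in> M"
    using mem_mono[of r "v @ [w]" "msubst L (Suc (length v)) (cyl (length v)) (ex_s L (length v) r)"]
      le_cyl_ex[OF r] w r by (simp add: subst_closed[OF subst_sym_cyl])
  then show "(v, ex_s L (length v) r) \<in> M"
    using subst_mem_iff[of "length v" "v @ [w]" "cyl (length v)" "ex_s L (length v) r"] subst_sym_cyl r
    by (simp add: map_nth_cyl_append)
qed

lemma ex_iter_mem_imp:
  "x \<in> carr L (m + n) \<Longrightarrow> (v, ex_iter L m n x) \<in> M \<Longrightarrow> length v = m \<Longrightarrow>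
    \<exists>w. length w = n \<and> (v @ w, x) \<in> M"
proof (induction n arbitrary: x)
  case (Suc n)
  obtain w where w: "length w = n" "(v @ w, ex_s L (m + n) x) \<in> M"
    using Suc.IH[of "ex_s L (m + n) x"] Suc.prems by auto
  then obtain y where "((v @ w) @ [y], x) \<in> M"
    using ex_mem_iff[of x "v @ w"] Suc.prems by auto
  then show ?case
    using w by (intro exI[of _ "w @ [y]"]) simp
qed simp

text \<open>The n-fold projection of x is a nonzero, hence true, sentence.\<close>

lemma nonzero_mem:
  assumes x: "x \<in> carr L n" and nz: "x \<noteq> bot_s L n"
  obtains v where "length v = n" "(v, x) \<in> M"
proof -
  have "ex_iter L 0 n x = top_s L 0"
    using sort0_two_valued[of "ex_iter L 0 n x"] ex_iter_nonzero[of x 0 n] x nz by auto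
  then show ?thesis
    using ex_iter_mem_imp[of x 0 n "[]"] top_mem[of "[]"] x that by auto
qed

end

definition extension :: "('v list \<times> 'a) set \<Rightarrow> nat \<Rightarrow> 'a \<Rightarrow> 'v list set" where
  "extension M n r = {v. length v = n \<and> (v, r) \<in> M}"

lemma tuples_UNIV: "tuples UNIV n = {xs. length xs = n}"
  by (simp add: tuples_def)

context maximal_consistent
begin

lemma inj_on_extension: "inj_on (extension M n) (carr L n)"
proof (rule inj_onI)
  fix r s
  assume r: "r \<in> carr L n" and s: "s \<in> carr L n" and ext: "extension M n r = extension M n s"
  have "inf_s L n x (neg_s L n y) = bot_s L n"
    if x: "x \<in> carr L n" and y: "y \<in> carr L n" and xy: "extension M n x = extension M n y" for x y
  proof (rule ccontr)
    assume "inf_s L n x (neg_s L n y) \<noteq> bot_s L n"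
    then obtain v where v: "length v = n" "(v, inf_s L n x (neg_s L n y)) \<in> M"
      using nonzero_mem[of "inf_s L n x (neg_s L n y)" n] x y by auto
    then have "(v, x) \<in> M" "(v, y) \<notin> M"
      using inf_mem_iff[of x v "neg_s L n y"] neg_mem_iff[of y v] x y by auto
    then show False
      using xy v by (auto simp: extension_def)
  qed
  then show "r = s"
    using sort.neq_imp_meet_neg_neq_zero[OF r s] r s ext by blast
qed

lemma is_hom_extension: "is_hom (extension M) L (fo_alg UNIV)"
  unfolding is_hom_def fo_alg_def
  by (auto simp: extension_def tuples_UNIV top_mem bot_not_mem sup_mem_iff inf_mem_iff neg_mem_iff
      ex_mem_iff subst_sym_def subst_mem_iff[unfolded subst_sym_def])

lemma canonical_model: "iso_to_subalg_of_fo L (UNIV :: 'a eps_term set)"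
  by (rule iso_to_subalg_of_fo_if_inj_hom[OF is_msalg is_hom_extension _ inj_on_extension])
    (auto simp: extension_def tuples_UNIV)

end

context fol_algebra_nonempty
begin

lemma maximal_consistent_exists: "\<exists>M. maximal_consistent L M"
proof -
  define A where "A = {S. henkin_set L \<subseteq> S \<and> (\<forall>p\<in>S. well_sorted L p) \<and> (\<forall>X. set X \<subseteq> S \<longrightarrow> consistent L X)}"
  have "\<exists>M\<in>A. \<forall>S\<in>A. M \<subseteq> S \<longrightarrow> S = M"
  proof (rule subset_Zorn_nonempty)
    have "henkin_set L \<in> A"
      using consistent_henkin_set henkin_set_well_sorted by (auto simp: A_def)
    then show "A \<noteq> {}"
      by blast
  next
    fix C
    assume C: "C \<noteq> {}" "subset.chain A C"
    then have CA: "C \<subseteq> A"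
      by (simp add: subset.chain_def)
    show "\<Union>C \<in> A"
      unfolding A_def
    proof (intro CollectI conjI allI impI ballI)
      obtain S where "S \<in> C"
        using C(1) by blast
      moreover from this have "henkin_set L \<subseteq> S"
        using CA by (auto simp: A_def)
      ultimately show "henkin_set L \<subseteq> \<Union>C"
        by blast
      show "well_sorted L p" if "p \<in> \<Union>C" for p
        using that CA by (auto simp: A_def)
      show "consistent L X" if X: "set X \<subseteq> \<Union>C" for X
      proof -
        obtain S where "S \<in> C" "set X \<subseteq> S"
          using finite_subset_Union_chain[OF finite_set X C] by blast
        then show ?thesis
          using CA by (auto simp: A_def)
      qed
    qed
  qed
  then obtain M where M: "M \<in> A" and max: "\<forall>S\<in>A. M \<subseteq> S \<longrightarrow> S = M"
    by blast
  have "maximal_consistent L M"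
  proof unfold_locales
    show "henkin_set L \<subseteq> M" "p \<in> M \<Longrightarrow> well_sorted L p" "set X \<subseteq> M \<Longrightarrow> consistent L X" for p X
      using M by (auto simp: A_def)
    show "S = M" if "M \<subseteq> S" "\<And>p. p \<in> S \<Longrightarrow> well_sorted L p" "\<And>X. set X \<subseteq> S \<Longrightarrow> consistent L X"
      for S
    proof -
      have "S \<in> A"
        using M that by (auto simp: A_def)
      then show ?thesis
        using max that(1) by blast
    qed
  qed
  then show ?thesis ..
qed

lemma representable_nonempty: "iso_to_subalg_of_fo L (UNIV :: 'a eps_term set)"
proof -
  obtain M where "maximal_consistent L M"
    using maximal_consistent_exists by blast
  then show ?thesis
    by (rule maximal_consistent.canonical_model)
qed

end

lemma tuples_empty: "tuples {} n = (if n = 0 then {[]} else {})"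
  by (auto simp: tuples_def)

context fol_algebra
begin

text \<open>If \<exists>(1) is false, all sorts n > 0 are trivial and sort 0 is {0, 1}: L is A(\<emptyset>).\<close>

lemma representable_empty:
  assumes ex_top: "ex_s L 0 (top_s L 1) \<noteq> top_s L 0"
  shows "iso_to_subalg_of_fo L ({} :: 'w set)"
proof -
  have "ex_s L 0 (top_s L 1) = bot_s L 0"
    using sort0_two_valued[of "ex_s L 0 (top_s L 1)"] ex_top by simp
  then have "sort.le 1 (top_s L 1) (bot_s L 1)"
    using le_cyl_ex[of "top_s L 1" 0] subst_sym_cyl[of 0] by simp
  then have "top_s L 1 = bot_s L 1"
    by (simp add: sort.le_zero_iff)
  then have "top_s L n = bot_s L n" if "n > 0" for n
    using subst_top[of 1 n "[0]"] subst_bot[of 1 n "[0]"] that by (simp add: subst_sym_def)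
  then have trivial: "x = bot_s L n" if "n > 0" "x \<in> carr L n" for n x
    using sort.meet_one[OF that(2)] sort.meet_zero[OF that(2)] that by simp
  have sort0: "x = bot_s L 0 \<or> x = top_s L 0" if "x \<in> carr L 0" for x
    using sort0_two_valued that by blast
  note bot_top = sort0_top_neq_bot[symmetric]
  define h :: "nat \<Rightarrow> 'a \<Rightarrow> 'w list set" where
    "h n x = (if n = 0 \<and> x = top_s L 0 then {[]} else {})" for n x
  have hom: "is_hom h L (fo_alg {})"
    unfolding is_hom_def
  proof (intro conjI allI ballI impI)
    fix n
    show "h n (bot_s L n) = bot_s (fo_alg {}) n"
      using bot_top by (cases n) (simp_all add: h_def fo_alg_def)
    show "h n (top_s L n) = top_s (fo_alg {}) n"
      by (simp add: h_def fo_alg_def tuples_empty)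
    fix x
    assume x: "x \<in> carr L n"
    show "h n (neg_s L n x) = neg_s (fo_alg {}) n (h n x)"
      using sort0[of x] x bot_top
      by (cases "n = 0") (auto simp: h_def fo_alg_def tuples_empty sort.neg_one sort.neg_zero)
    fix y
    assume y: "y \<in> carr L n"
    show "h n (sup_s L n x y) = sup_s (fo_alg {}) n (h n x) (h n y)"
      using sort0[of x] sort0[of y] x y bot_top
      by (cases "n = 0") (auto simp: h_def fo_alg_def sort.join_zero sort.zero_join sort.join_one sort.one_join)
    show "h n (inf_s L n x y) = inf_s (fo_alg {}) n (h n x) (h n y)"
      using sort0[of x] sort0[of y] x y bot_top
      by (cases "n = 0") (auto simp: h_def fo_alg_def sort.meet_one sort.one_meet sort.meet_zero sort.zero_meet)
  next
    fix n x
    assume "x \<in> carr L (Suc n)"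
    then show "h n (ex_s L n x) = ex_s (fo_alg {}) n (h (Suc n) x)"
      using trivial[of "Suc n" x] bot_top by (cases n) (simp_all add: h_def fo_alg_def tuples_empty)
  next
    fix n k \<alpha> x
    assume \<alpha>: "subst_sym n k \<alpha>" and x: "x \<in> carr L n"
    show "h k (msubst L k \<alpha> x) = msubst (fo_alg {}) k \<alpha> (h n x)"
    proof (cases "k = 0")
      case True
      then have "\<alpha> = []" "n = 0"
        using \<alpha> by (auto simp: subst_sym_def)
      then show ?thesis
        using True subst_id[OF x] by (auto simp: h_def fo_alg_def tuples_empty)
    qed (simp add: h_def fo_alg_def tuples_empty)
  qed
  have inj: "inj_on (h n) (carr L n)" for n
  proof (cases "n = 0")
    case True
    then show ?thesis
      using sort0 bot_top by (auto simp: inj_on_def h_def)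
  next
    case False
    then show ?thesis
      using trivial[of n] by (auto simp: inj_on_def)
  qed
  show ?thesis
    by (rule iso_to_subalg_of_fo_if_inj_hom[OF is_msalg hom _ inj]) (auto simp: h_def tuples_empty)
qed

end

lemma is_hom_comp:
  assumes h: "is_hom h L M" and g: "is_hom g M N" and into: "\<And>n x. x \<in> carr L n \<Longrightarrow> h n x \<in> carr M n"
  shows "is_hom (\<lambda>n. g n \<circ> h n) L N"
proof -
  note H = h[unfolded is_hom_def] and G = g[unfolded is_hom_def]
  show ?thesis
    unfolding is_hom_def
  proof (intro conjI allI ballI impI)
    fix n k \<alpha> x y
    show "(g n \<circ> h n) (bot_s L n) = bot_s N n" "(g n \<circ> h n) (top_s L n) = top_s N n"
      using H G by simp_all
    assume x: "x \<in> carr L n" and y: "y \<in> carr L n"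
    show "(g n \<circ> h n) (sup_s L n x y) = sup_s N n ((g n \<circ> h n) x) ((g n \<circ> h n) y)"
      "(g n \<circ> h n) (inf_s L n x y) = inf_s N n ((g n \<circ> h n) x) ((g n \<circ> h n) y)"
      "(g n \<circ> h n) (neg_s L n x) = neg_s N n ((g n \<circ> h n) x)"
      using H G x y into by simp_all
  next
    fix n x
    assume "x \<in> carr L (Suc n)"
    then show "(g n \<circ> h n) (ex_s L n x) = ex_s N n ((g (Suc n) \<circ> h (Suc n)) x)"
      using H G into by simp
  next
    fix n k \<alpha> x
    assume "subst_sym n k \<alpha>" "x \<in> carr L n"
    then show "(g k \<circ> h k) (msubst L k \<alpha> x) = msubst N k \<alpha> ((g n \<circ> h n) x)"
      using H G into by simp
  qed
qed

lemma inj_on_map_tuples: "inj_on f W \<Longrightarrow> inj_on (map f) (tuples W n)"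
  by (rule inj_on_mapI) (auto simp: tuples_def intro: inj_on_subset)

lemma map_in_tuples: "xs \<in> tuples W n \<Longrightarrow> map f xs \<in> tuples (f ` W) n"
  by (auto simp: tuples_def)

lemma image_map_tuples: "map f ` tuples W n = tuples (f ` W) n"
proof (intro equalityI subsetI)
  fix ys
  assume ys: "ys \<in> tuples (f ` W) n"
  then have "ys \<in> lists (f ` W)"
    by (auto simp: tuples_def)
  then obtain xs where "xs \<in> lists W" "ys = map f xs"
    unfolding lists_image by blast
  then show "ys \<in> map f ` tuples W n"
    using ys by (auto simp: tuples_def)
qed (auto simp: map_in_tuples)

lemma image_map_ex_tuples:
  assumes f: "inj_on f W" and R: "R \<subseteq> tuples W (Suc n)"
  shows "map f ` {xs \<in> tuples W n. \<exists>y\<in>W. xs @ [y] \<in> R} =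
    {ys \<in> tuples (f ` W) n. \<exists>z\<in>f ` W. ys @ [z] \<in> map f ` R}"
proof (intro equalityI subsetI)
  fix ys
  assume "ys \<in> map f ` {xs \<in> tuples W n. \<exists>y\<in>W. xs @ [y] \<in> R}"
  then obtain xs y where "ys = map f xs" "xs \<in> tuples W n" "y \<in> W" "xs @ [y] \<in> R"
    by blast
  moreover have "map f xs @ [f y] = map f (xs @ [y])"
    by simp
  ultimately show "ys \<in> {ys \<in> tuples (f ` W) n. \<exists>z\<in>f ` W. ys @ [z] \<in> map f ` R}"
    using map_in_tuples by fastforce
next
  fix ys
  assume ys: "ys \<in> {ys \<in> tuples (f ` W) n. \<exists>z\<in>f ` W. ys @ [z] \<in> map f ` R}"
  then obtain xs where xs: "xs \<in> tuples W n" "ys = map f xs"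
    using image_map_tuples[of f W n] by blast
  obtain y zs where y: "y \<in> W" and zs: "zs \<in> R" "map f xs @ [f y] = map f zs"
    using ys xs(2) by blast
  have "xs @ [y] \<in> tuples W (Suc n)"
    using xs y by (simp add: tuples_def)
  then have "xs @ [y] = zs"
    using inj_on_map_tuples[OF f] zs R by (auto simp: inj_on_def)
  then show "ys \<in> map f ` {xs \<in> tuples W n. \<exists>y\<in>W. xs @ [y] \<in> R}"
    using xs y zs by blast
qed

lemma image_map_subst_tuples:
  assumes f: "inj_on f W" and R: "R \<subseteq> tuples W n" and \<alpha>: "subst_sym n k \<alpha>"
  shows "map f ` {xs \<in> tuples W k. map (nth xs) \<alpha> \<in> R} =
    {ys \<in> tuples (f ` W) k. map (nth ys) \<alpha> \<in> map f ` R}"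
proof -
  have map_nth: "map (nth (map f xs)) \<alpha> = map f (map (nth xs) \<alpha>)" if "xs \<in> tuples W k" for xs
    using that \<alpha> by (auto simp: tuples_def subst_sym_def)
  have tuples_nth: "map (nth xs) \<alpha> \<in> tuples W n" if "xs \<in> tuples W k" for xs
    using that \<alpha> by (auto simp: tuples_def subst_sym_def)
  show ?thesis
  proof (intro equalityI subsetI)
    fix ys
    assume "ys \<in> map f ` {xs \<in> tuples W k. map (nth xs) \<alpha> \<in> R}"
    then show "ys \<in> {ys \<in> tuples (f ` W) k. map (nth ys) \<alpha> \<in> map f ` R}"
      using map_in_tuples map_nth by fastforce
  next
    fix ys
    assume ys: "ys \<in> {ys \<in> tuples (f ` W) k. map (nth ys) \<alpha> \<in> map f ` R}"
    then obtain xs where xs: "xs \<in> tuples W k" "ys = map f xs"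
      using image_map_tuples[of f W k] by blast
    obtain zs where zs: "zs \<in> R" "map f (map (nth xs) \<alpha>) = map f zs"
      using ys xs map_nth[OF xs(1)] by auto
    then have "map (nth xs) \<alpha> = zs"
      using inj_on_map_tuples[OF f] R tuples_nth[OF xs(1)] by (auto simp: inj_on_def)
    then show "ys \<in> map f ` {xs \<in> tuples W k. map (nth xs) \<alpha> \<in> R}"
      using xs zs by blast
  qed
qed

lemma is_hom_image_map:
  assumes f: "inj_on f W"
  shows "is_hom (\<lambda>n. (`) (map f)) (fo_alg W) (fo_alg (f ` W))"
  unfolding is_hom_def
proof (intro conjI allI ballI impI)
  fix n k \<alpha> R S
  assume R: "R \<in> carr (fo_alg W) n" and S: "S \<in> carr (fo_alg W) n"
  then have R: "R \<subseteq> tuples W n" and S: "S \<subseteq> tuples W n"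
    by (simp_all add: fo_alg_def)
  show "map f ` inf_s (fo_alg W) n R S = inf_s (fo_alg (f ` W)) n (map f ` R) (map f ` S)"
    using inj_on_image_Int[OF inj_on_map_tuples[OF f] R S] by (simp add: fo_alg_def)
  show "map f ` neg_s (fo_alg W) n R = neg_s (fo_alg (f ` W)) n (map f ` R)"
    using inj_on_image_set_diff[OF inj_on_map_tuples[OF f] Diff_subset R]
    by (simp add: fo_alg_def image_map_tuples)
qed (simp_all add: fo_alg_def image_Un image_map_tuples image_map_ex_tuples[OF f]
    image_map_subst_tuples[OF f])

lemma iso_to_subalg_of_fo_image:
  assumes L: "is_msalg L" and f: "inj_on f W" and W: "iso_to_subalg_of_fo L W"
  shows "iso_to_subalg_of_fo L (f ` W)"
proof -
  obtain h where hom: "is_hom h L (fo_alg W)" and inj: "\<And>n. inj_on (h n) (carr L n)"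
    and h_tuples: "\<And>n x. x \<in> carr L n \<Longrightarrow> h n x \<subseteq> tuples W n"
    using W by (rule inj_hom_if_iso_to_subalg_of_fo) blast
  show ?thesis
  proof (rule iso_to_subalg_of_fo_if_inj_hom[OF L is_hom_comp[OF hom is_hom_image_map[OF f]]])
    show "h n x \<in> carr (fo_alg W) n" if "x \<in> carr L n" for n x
      using h_tuples[OF that] by (simp add: fo_alg_def)
    show "(\<lambda>n. (`) (map f) \<circ> h n) n ` carr L n \<subseteq> Pow (tuples (f ` W) n)" for n
      using h_tuples image_map_tuples[of f W n] by fastforce
    show "inj_on ((\<lambda>n. (`) (map f) \<circ> h n) n) (carr L n)" for n
    proof (rule comp_inj_on)
      show "inj_on ((`) (map f)) (h n ` carr L n)"
        by (rule inj_on_image, rule inj_on_subset[OF inj_on_map_tuples[OF f, of n]]) (use h_tuples in blast)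
    qed (rule inj)
  qed
qed

lemma ex_inj_pairing: "\<exists>pr :: (nat \<times> 'a set) \<times> (nat \<times> 'a set) \<Rightarrow> nat \<times> 'a set. inj pr"
proof -
  have "infinite (UNIV :: (nat \<times> 'a set) set)"
    by (simp add: finite_prod)
  then have "ordLeq3 (card_of ((UNIV :: (nat \<times> 'a set) set) \<times> (UNIV :: (nat \<times> 'a set) set)))
      (card_of (UNIV :: (nat \<times> 'a set) set))"
    using card_of_Times_same_infinite ordIso_iff_ordLeq by blast
  then show ?thesis
    unfolding card_of_ordLeq[symmetric] UNIV_Times_UNIV by blast
qed

text \<open>A list is coded by iterating an injective pairing; the first component is shifted so that a
  code of a nonempty list never looks like the code (0, _) of a base value.\<close>

definition code_cons :: "('b \<times> 'b \<Rightarrow> nat \<times> 'c) \<Rightarrow> 'b \<Rightarrow> 'b \<Rightarrow> nat \<times> 'c" where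
  "code_cons pr x c = (Suc (fst (pr (x, c))), snd (pr (x, c)))"

lemma code_cons_eq_iff: "code_cons pr x c = code_cons pr y d \<longleftrightarrow> pr (x, c) = pr (y, d)"
  by (simp add: code_cons_def prod_eq_iff)

lemma fst_code_cons_nonzero [simp]: "fst (code_cons pr x c) \<noteq> 0"
  by (simp add: code_cons_def)

lemma foldr_code_cons_inj:
  assumes pr: "inj pr" and "fst a = 0" "fst b = 0"
    and "foldr (code_cons pr) xs a = foldr (code_cons pr) ys b"
  shows "xs = ys \<and> a = b"
  using assms(2-)
proof (induction xs arbitrary: ys)
  case Nil
  then show ?case
    by (cases ys) (auto dest: arg_cong[of _ _ fst])
next
  case (Cons x xs)
  then obtain y ys' where ys: "ys = y # ys'"
    by (cases ys) (auto dest: arg_cong[of _ _ fst])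
  then have "pr (x, foldr (code_cons pr) xs a) = pr (y, foldr (code_cons pr) ys' b)"
    using Cons.prems(3) by (simp add: code_cons_eq_iff)
  then have "x = y" "foldr (code_cons pr) xs a = foldr (code_cons pr) ys' b"
    using pr by (auto dest: injD)
  then show ?case
    using Cons.IH[of ys'] Cons.prems ys by simp
qed

fun encode_term :: "((nat \<times> 'a set) \<times> (nat \<times> 'a set) \<Rightarrow> nat \<times> 'a set) \<Rightarrow> 'a eps_term \<Rightarrow> nat \<times> 'a set" where
  "encode_term pr (Eps \<psi> ts) = foldr (code_cons pr) (map (encode_term pr) ts) (0, {\<psi>})"

lemma inj_encode_term:
  assumes pr: "inj pr"
  shows "inj (encode_term pr)"
proof -
  have "encode_term pr s = encode_term pr t \<longrightarrow> s = t" for s t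
  proof (induction s arbitrary: t)
    case (Eps \<psi> ts)
    show ?case
    proof
      assume eq: "encode_term pr (Eps \<psi> ts) = encode_term pr t"
      obtain \<psi>' ts' where t: "t = Eps \<psi>' ts'"
        by (cases t)
      have "map (encode_term pr) ts = map (encode_term pr) ts'" and "\<psi> = \<psi>'"
        using foldr_code_cons_inj[OF pr, of "(0, {\<psi>})" "(0, {\<psi>'})"] eq t by auto
      moreover from this(1) have "ts = ts'"
        using Eps.IH by (metis list.inj_map_strong)
      ultimately show "Eps \<psi> ts = t"
        using t by simp
    qed
  qed
  then show ?thesis
    by (auto intro: injI)
qed

lemma ex_inj_eps_term: "\<exists>f :: 'a eps_term \<Rightarrow> nat \<times> 'a set. inj f"
  using ex_inj_pairing inj_encode_term by blast

lemma tuples_Suc_iff: "zs \<in> tuples W (Suc n) \<longleftrightarrow> (\<exists>xs y. zs = xs @ [y] \<and> xs \<in> tuples W n \<and> y \<in> W)"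
proof
  assume zs: "zs \<in> tuples W (Suc n)"
  then have "zs \<noteq> []"
    by (auto simp: tuples_def)
  then have "zs = butlast zs @ [last zs]" and "last zs \<in> W"
    using zs by (auto simp: tuples_def)
  moreover have "butlast zs \<in> tuples W n"
    using zs by (auto simp: tuples_def dest: in_set_butlastD)
  ultimately show "\<exists>xs y. zs = xs @ [y] \<and> xs \<in> tuples W n \<and> y \<in> W"
    by blast
qed (auto simp: tuples_def)

lemma map_nth_in_tuples: "xs \<in> tuples W k \<Longrightarrow> subst_sym n k \<alpha> \<Longrightarrow> map (nth xs) \<alpha> \<in> tuples W n"
  by (auto simp: tuples_def subst_sym_def)

lemma subst_sym_part_cyl: "i < length ks \<Longrightarrow> subst_sym (ks ! i) (sum_list ks) (part_cyl ks i)"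
proof -
  assume i: "i < length ks"
  have "sum_list (take i ks) + ks ! i = sum_list (take (Suc i) ks)"
    using i by (simp add: take_Suc_conv_app_nth)
  also have "\<dots> \<le> sum_list (take (Suc i) ks) + sum_list (drop (Suc i) ks)"
    by simp
  also have "\<dots> = sum_list ks"
    by (metis append_take_drop_id sum_list_append)
  finally show ?thesis
    by (auto simp: subst_sym_def part_cyl_def)
qed

lemma map_nth_concat_part_cyl:
  assumes lengths: "map length ts = ks" and i: "i < length ks"
  shows "map (nth (concat ts)) (part_cyl ks i) = ts ! i"
proof -
  have it: "i < length ts"
    using lengths i by auto
  have concat: "concat ts = concat (take i ts) @ (ts ! i @ concat (drop (Suc i) ts))"
    using id_take_nth_drop[OF it] by (metis concat.simps(2) concat_append)
  have prefix: "length (concat (take i ts)) = sum_list (take i ks)"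
    by (simp add: length_concat take_map[symmetric] lengths)
  show ?thesis
  proof (rule nth_equalityI)
    show "length (map (nth (concat ts)) (part_cyl ks i)) = length (ts ! i)"
      using lengths it by (auto simp: part_cyl_def)
    fix l
    assume "l < length (map (nth (concat ts)) (part_cyl ks i))"
    then have "l < length (ts ! i)"
      using lengths it by (auto simp: part_cyl_def)
    moreover have "ks ! i = length (ts ! i)"
      using lengths it by auto
    ultimately show "map (nth (concat ts)) (part_cyl ks i) ! l = ts ! i ! l"
      by (simp add: part_cyl_def concat nth_append prefix)
  qed
qed

locale fo_representation = ms_algebra +
  fixes W :: "'w set" and h :: "nat \<Rightarrow> 'a \<Rightarrow> 'w list set"
  assumes hom: "is_hom h L (fo_alg W)"
    and inj_h: "\<And>n. inj_on (h n) (carr L n)"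
    and h_tuples: "\<And>n x. x \<in> carr L n \<Longrightarrow> h n x \<subseteq> tuples W n"
begin

lemma eq_if_h_eq: "x \<in> carr L n \<Longrightarrow> y \<in> carr L n \<Longrightarrow> h n x = h n y \<Longrightarrow> x = y"
  using inj_h by (auto dest: inj_onD)

lemma h_bot [simp]: "h n (bot_s L n) = {}"
  and h_top [simp]: "h n (top_s L n) = tuples W n"
  and h_sup [simp]: "x \<in> carr L n \<Longrightarrow> y \<in> carr L n \<Longrightarrow> h n (sup_s L n x y) = h n x \<union> h n y"
  and h_inf [simp]: "x \<in> carr L n \<Longrightarrow> y \<in> carr L n \<Longrightarrow> h n (inf_s L n x y) = h n x \<inter> h n y"
  and h_neg [simp]: "x \<in> carr L n \<Longrightarrow> h n (neg_s L n x) = tuples W n - h n x"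
  and h_ex [simp]: "x \<in> carr L (Suc n) \<Longrightarrow>
    h n (ex_s L n x) = {xs \<in> tuples W n. \<exists>y\<in>W. xs @ [y] \<in> h (Suc n) x}"
  and h_subst [simp]: "subst_sym n k \<alpha> \<Longrightarrow> x \<in> carr L n \<Longrightarrow>
    h k (msubst L k \<alpha> x) = {xs \<in> tuples W k. map (nth xs) \<alpha> \<in> h n x}"
  using hom by (simp_all add: is_hom_def fo_alg_def)

lemma le_s_iff_subset:
  assumes x: "x \<in> carr L n" and y: "y \<in> carr L n"
  shows "le_s L n x y \<longleftrightarrow> h n x \<subseteq> h n y"
proof -
  have "x = inf_s L n x y \<longleftrightarrow> h n x = h n (inf_s L n x y)"
    using eq_if_h_eq[of x n "inf_s L n x y"] x y by (metis inf_closed)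
  also have "\<dots> \<longleftrightarrow> h n x \<subseteq> h n y"
    using x y by auto
  finally show ?thesis
    by (simp add: le_s_def)
qed

lemma h_big_inf: "set xs \<subseteq> carr L n \<Longrightarrow> h n (big_inf L n xs) = tuples W n \<inter> (\<Inter>x\<in>set xs. h n x)"
proof (induction xs)
  case (Cons x xs)
  then have "big_inf L n xs \<in> carr L n"
    by simp
  then show ?case
    using Cons h_tuples[of x n] by (auto simp: big_inf_def)
qed (simp add: big_inf_def)

lemma h_big_sup: "set xs \<subseteq> carr L n \<Longrightarrow> h n (big_sup L n xs) = (\<Union>x\<in>set xs. h n x)"
proof (induction xs)
  case (Cons x xs)
  then have "big_sup L n xs \<in> carr L n"
    by simp
  then show ?case
    using Cons by (auto simp: big_sup_def)
qed (simp add: big_sup_def)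

lemma h_ex_iter: "x \<in> carr L (m + n) \<Longrightarrow>
    h m (ex_iter L m n x) = {xs \<in> tuples W m. \<exists>ys\<in>tuples W n. xs @ ys \<in> h (m + n) x}"
proof (induction n arbitrary: x)
  case 0
  moreover have "tuples W 0 = {[]}"
    by (auto simp: tuples_def)
  ultimately show ?case
    using h_tuples[of x m] by auto
next
  case (Suc n)
  have x: "x \<in> carr L (Suc (m + n))"
    using Suc.prems by simp
  have IH: "h m (ex_iter L m (Suc n) x) =
      {xs \<in> tuples W m. \<exists>ys\<in>tuples W n. xs @ ys \<in> h (m + n) (ex_s L (m + n) x)}"
    using Suc.IH[of "ex_s L (m + n) x"] x by simp
  show ?case
  proof (rule set_eqI, rule iffI)
    fix xs
    assume "xs \<in> h m (ex_iter L m (Suc n) x)"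
    then obtain ys y where xs: "xs \<in> tuples W m" and ys: "ys \<in> tuples W n" and y: "y \<in> W"
      and "(xs @ ys) @ [y] \<in> h (Suc (m + n)) x"
      unfolding IH h_ex[OF x] by blast
    moreover have "ys @ [y] \<in> tuples W (Suc n)"
      using ys y by (auto simp: tuples_def)
    ultimately show "xs \<in> {xs \<in> tuples W m. \<exists>ys\<in>tuples W (Suc n). xs @ ys \<in> h (m + Suc n) x}"
      by auto
  next
    fix xs
    assume "xs \<in> {xs \<in> tuples W m. \<exists>ys\<in>tuples W (Suc n). xs @ ys \<in> h (m + Suc n) x}"
    then obtain zs where xs: "xs \<in> tuples W m" and zs: "zs \<in> tuples W (Suc n)"
      and mem: "xs @ zs \<in> h (m + Suc n) x"
      by blast
    obtain ys y where zs_eq: "zs = ys @ [y]" and ys: "ys \<in> tuples W n" and y: "y \<in> W"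
      using zs unfolding tuples_Suc_iff by blast
    have "xs @ ys \<in> tuples W (m + n)"
      using xs ys by (auto simp: tuples_def)
    moreover have "(xs @ ys) @ [y] \<in> h (Suc (m + n)) x"
      using mem zs_eq by simp
    ultimately have "xs @ ys \<in> h (m + n) (ex_s L (m + n) x)"
      unfolding h_ex[OF x] using y by blast
    then show "xs \<in> h m (ex_iter L m (Suc n) x)"
      unfolding IH using xs ys by blast
  qed
qed

lemma ax1_holds: "ax1 L"
  unfolding ax1_def
proof (intro allI ballI conjI)
  fix n x y z
  assume x: "x \<in> carr L n" and y: "y \<in> carr L n" and z: "z \<in> carr L n"
  show "sup_s L n (sup_s L n x y) z = sup_s L n x (sup_s L n y z)"
    by (rule eq_if_h_eq[where n = n]) (use x y z in \<open>simp_all add: Un_assoc\<close>)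
  show "inf_s L n (inf_s L n x y) z = inf_s L n x (inf_s L n y z)"
    by (rule eq_if_h_eq[where n = n]) (use x y z in \<open>simp_all add: Int_assoc\<close>)
  show "sup_s L n x y = sup_s L n y x"
    by (rule eq_if_h_eq[where n = n]) (use x y in \<open>simp_all add: Un_commute\<close>)
  show "inf_s L n x y = inf_s L n y x"
    by (rule eq_if_h_eq[where n = n]) (use x y in \<open>simp_all add: Int_commute\<close>)
  show "sup_s L n x (inf_s L n x y) = x"
    by (rule eq_if_h_eq[where n = n]) (use x y in \<open>simp_all add: Un_Int_eq\<close>)
  show "inf_s L n x (sup_s L n x y) = x"
    by (rule eq_if_h_eq[where n = n]) (use x y in \<open>simp_all add: Int_Un_eq\<close>)
  show "inf_s L n x (sup_s L n y z) = sup_s L n (inf_s L n x y) (inf_s L n x z)"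
    by (rule eq_if_h_eq[where n = n]) (use x y z in \<open>simp_all add: Int_Un_distrib\<close>)
  show "sup_s L n x (bot_s L n) = x"
    by (rule eq_if_h_eq[where n = n]) (use x in simp_all)
  show "inf_s L n x (top_s L n) = x"
    by (rule eq_if_h_eq[where n = n]) (use x h_tuples[OF x] in \<open>simp_all add: Int_absorb2\<close>)
qed

lemma ax2_holds: "ax2 L"
  unfolding ax2_def
proof (intro allI impI ballI conjI)
  fix n k \<alpha> x y
  assume \<alpha>: "subst_sym n k \<alpha>"
  show "msubst L k \<alpha> (bot_s L n) = bot_s L k"
    by (rule eq_if_h_eq[where n = k]) (use \<alpha> in simp_all)
  show "msubst L k \<alpha> (top_s L n) = top_s L k"
    by (rule eq_if_h_eq[where n = k]) (use \<alpha> map_nth_in_tuples in auto)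
  assume x: "x \<in> carr L n" and y: "y \<in> carr L n"
  show "msubst L k \<alpha> (sup_s L n x y) = sup_s L k (msubst L k \<alpha> x) (msubst L k \<alpha> y)"
    by (rule eq_if_h_eq[where n = k]) (use \<alpha> x y in auto)
  show "msubst L k \<alpha> (inf_s L n x y) = inf_s L k (msubst L k \<alpha> x) (msubst L k \<alpha> y)"
    by (rule eq_if_h_eq[where n = k]) (use \<alpha> x y in auto)
qed

lemma ax3_holds: "ax3 L"
  unfolding ax3_def
proof (intro allI impI ballI, elim conjE)
  fix k n m \<alpha> \<beta> r
  assume \<alpha>: "subst_sym k n \<alpha>" and \<beta>: "subst_sym n m \<beta>" and r: "r \<in> carr L k"
  have \<beta>\<alpha>: "subst_sym k m (map (nth \<beta>) \<alpha>)"
    using \<alpha> \<beta> by (auto simp: subst_sym_def)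
  have map_nth: "map (nth (map (nth xs) \<beta>)) \<alpha> = map ((!) xs \<circ> (!) \<beta>) \<alpha>" for xs :: "'w list"
    using \<alpha> \<beta> by (auto simp: subst_sym_def)
  have "h m (msubst L m (map (nth \<beta>) \<alpha>) r) = h m (msubst L m \<beta> (msubst L n \<alpha> r))"
    using \<alpha> \<beta> \<beta>\<alpha> r map_nth_in_tuples[OF _ \<beta>] by (auto simp: map_nth)
  then show "msubst L m (map (nth \<beta>) \<alpha>) r = msubst L m \<beta> (msubst L n \<alpha> r)"
    by (rule eq_if_h_eq[rotated 2]) (use \<alpha> \<beta> \<beta>\<alpha> r in simp_all)
qed

lemma ax4_holds: "ax4 L"
  unfolding ax4_def
proof (intro allI ballI)
  fix n r
  assume r: "r \<in> carr L n"
  have id: "subst_sym n n [0..<n]"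
    by (simp add: subst_sym_def)
  have "h n (msubst L n [0..<n] r) = h n r"
    using id r h_tuples[OF r] by (auto simp: tuples_def map_nth)
  then show "msubst L n [0..<n] r = r"
    by (rule eq_if_h_eq[rotated 2]) (use id r in simp_all)
qed

lemma ax5_holds: "ax5 L"
  unfolding ax5_def
proof (intro allI impI ballI)
  fix n k \<alpha> r
  assume \<alpha>: "subst_sym n k \<alpha>" and r: "r \<in> carr L n"
  have "h k (msubst L k \<alpha> (neg_s L n r)) = h k (neg_s L k (msubst L k \<alpha> r))"
    using \<alpha> r map_nth_in_tuples[OF _ \<alpha>] by auto
  then show "msubst L k \<alpha> (neg_s L n r) = neg_s L k (msubst L k \<alpha> r)"
    by (rule eq_if_h_eq[rotated 2]) (use \<alpha> r in simp_all)
qed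

lemma ax6_holds: "ax6 L"
  unfolding ax6_def
proof (intro allI ballI conjI)
  fix n r
  assume r: "r \<in> carr L n"
  show "sup_s L n r (neg_s L n r) = top_s L n"
    by (rule eq_if_h_eq[where n = n]) (use r h_tuples[OF r] in auto)
  show "inf_s L n r (neg_s L n r) = bot_s L n"
    by (rule eq_if_h_eq[where n = n]) (use r in auto)
qed

lemma ax7_holds: "ax7 L"
  unfolding ax7_def
proof (intro allI ballI conjI)
  fix n r s
  show "ex_s L n (bot_s L (Suc n)) = bot_s L n"
    by (rule eq_if_h_eq[where n = n]) simp_all
  assume r: "r \<in> carr L (Suc n)" and s: "s \<in> carr L (Suc n)"
  show "ex_s L n (sup_s L (Suc n) r s) = sup_s L n (ex_s L n r) (ex_s L n s)"
    by (rule eq_if_h_eq[where n = n]) (use r s in auto)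
qed

lemma ax8_holds: "ax8 L"
  unfolding ax8_def
proof (intro allI ballI)
  fix n r
  assume r: "r \<in> carr L (Suc n)"
  have cyl: "subst_sym n (Suc n) (cyl n)"
    by (rule subst_sym_cyl)
  have "h (Suc n) r \<subseteq> h (Suc n) (msubst L (Suc n) (cyl n) (ex_s L n r))"
  proof
    fix zs
    assume zs: "zs \<in> h (Suc n) r"
    have zs_tuple: "zs \<in> tuples W (Suc n)"
      using zs h_tuples[OF r] by blast
    then obtain xs y where xs: "zs = xs @ [y]" "xs \<in> tuples W n" "y \<in> W"
      unfolding tuples_Suc_iff by blast
    have "xs \<in> h n (ex_s L n r)"
      unfolding h_ex[OF r] using xs zs by blast
    moreover have "map (nth zs) (cyl n) = xs"
      using xs(1,2) by (simp add: map_nth_cyl_append tuples_def)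
    ultimately show "zs \<in> h (Suc n) (msubst L (Suc n) (cyl n) (ex_s L n r))"
      using zs_tuple cyl r by (simp del: h_ex)
  qed
  then show "le_s L (Suc n) r (msubst L (Suc n) (cyl n) (ex_s L n r))"
    using le_s_iff_subset r subst_closed[OF cyl] by simp
qed

lemma ax9_holds: "ax9 L"
  unfolding ax9_def
proof (intro allI ballI)
  fix n r s
  assume r: "r \<in> carr L (Suc n)" and s: "s \<in> carr L n"
  have cyl: "subst_sym n (Suc n) (cyl n)"
    by (rule subst_sym_cyl)
  have "xs \<in> tuples W n \<Longrightarrow> map (nth (xs @ [y])) (cyl n) = xs" for xs y
    by (simp add: map_nth_cyl_append tuples_def)
  moreover have "xs \<in> tuples W n \<Longrightarrow> y \<in> W \<Longrightarrow> xs @ [y] \<in> tuples W (Suc n)" for xs y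
    by (auto simp: tuples_def)
  ultimately have "h n (ex_s L n (inf_s L (Suc n) r (msubst L (Suc n) (cyl n) s))) =
      h n (inf_s L n (ex_s L n r) s)"
    using r s cyl h_tuples[OF s] subst_closed[OF cyl s] by auto
  then show "ex_s L n (inf_s L (Suc n) r (msubst L (Suc n) (cyl n) s)) = inf_s L n (ex_s L n r) s"
    by (rule eq_if_h_eq[rotated 2]) (use r s subst_closed[OF cyl s] in simp_all)
qed

end

lemma ex_tuple_iff_all_ex: "(\<exists>ys\<in>tuples W n. \<forall>i<n. P i (ys ! i)) \<longleftrightarrow> (\<forall>i<n. \<exists>y\<in>W. P i y)"
proof
  assume "\<forall>i<n. \<exists>y\<in>W. P i y"
  then obtain y where "\<forall>i<n. y i \<in> W \<and> P i (y i)"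
    by metis
  then have "map y [0..<n] \<in> tuples W n \<and> (\<forall>i<n. P i (map y [0..<n] ! i))"
    by (auto simp: tuples_def)
  then show "\<exists>ys\<in>tuples W n. \<forall>i<n. P i (ys ! i)"
    by blast
next
  assume "\<exists>ys\<in>tuples W n. \<forall>i<n. P i (ys ! i)"
  then obtain ys where ys: "ys \<in> tuples W n" and P: "\<forall>i<n. P i (ys ! i)"
    by blast
  show "\<forall>i<n. \<exists>y\<in>W. P i y"
  proof (intro allI impI)
    fix i
    assume "i < n"
    then have "ys ! i \<in> W"
      using ys nth_mem[of i ys] by (auto simp: tuples_def)
    then show "\<exists>y\<in>W. P i y"
      using P \<open>i < n\<close> by blast
  qed
qed

lemma concat_in_tuples:
  assumes "length ts = length ks" and "\<forall>j<length ks. ts ! j \<in> tuples W (ks ! j)"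
  shows "concat ts \<in> tuples W (sum_list ks)"
proof -
  have "map length ts = ks"
    using assms by (intro nth_equalityI) (auto simp: tuples_def)
  moreover have "set t \<subseteq> W" if "t \<in> set ts" for t
    using that assms by (auto simp: tuples_def in_set_conv_nth)
  ultimately show ?thesis
    by (auto simp: tuples_def length_concat)
qed

context fo_representation
begin

lemma mem_h_big_inf_map:
  "\<forall>i<n. f i \<in> carr L N \<Longrightarrow>
    zs \<in> h N (big_inf L N (map f [0..<n])) \<longleftrightarrow> zs \<in> tuples W N \<and> (\<forall>i<n. zs \<in> h N (f i))"
  by (subst h_big_inf) auto

lemma mem_h_big_sup_map:
  "\<forall>i<n. f i \<in> carr L N \<Longrightarrow> zs \<in> h N (big_sup L N (map f [0..<n])) \<longleftrightarrow> (\<exists>i<n. zs \<in> h N (f i))"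
  by (subst h_big_sup) auto

lemma concat_mem_h_part_cyl:
  assumes i: "i < length ks" and x: "x \<in> carr L (ks ! i)"
    and ts: "length ts = length ks" "\<forall>j<length ks. ts ! j \<in> tuples W (ks ! j)"
  shows "concat ts \<in> h (sum_list ks) (msubst L (sum_list ks) (part_cyl ks i) x) \<longleftrightarrow> ts ! i \<in> h (ks ! i) x"
proof -
  have lengths: "map length ts = ks"
    using ts by (intro nth_equalityI) (auto simp: tuples_def)
  show ?thesis
    using concat_in_tuples[OF ts]
    using subst_sym_part_cyl[OF i] x map_nth_concat_part_cyl[OF lengths i] by simp
qed

text \<open>Axiom (0): pick, for each i, a tuple in r i but not in s i; their concatenation lies in
  the left hand side but not in the right hand side.\<close>

lemma ax0_holds: "ax0 L"
  unfolding ax0_def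
proof (intro allI impI)
  fix ks rs ss
  assume "length rs = length ks \<and> length ss = length ks \<and>
    (\<forall>i<length ks. rs ! i \<in> carr L (ks ! i) \<and> ss ! i \<in> carr L (ks ! i))"
  then have r: "\<forall>i<length ks. rs ! i \<in> carr L (ks ! i)" and s: "\<forall>i<length ks. ss ! i \<in> carr L (ks ! i)"
    by auto
  define N where "N = sum_list ks"
  define R where "R i = msubst L N (part_cyl ks i) (rs ! i)" for i
  define S where "S i = msubst L N (part_cyl ks i) (ss ! i)" for i
  have R: "\<forall>i<length ks. R i \<in> carr L N" and S: "\<forall>i<length ks. S i \<in> carr L N"
    using r s by (auto simp: R_def S_def N_def intro!: subst_closed[OF subst_sym_part_cyl])
  assume "le_s L (sum_list ks) (big_inf L (sum_list ks) (map (\<lambda>i. msubst L (sum_list ks) (part_cyl ks i) (rs ! i)) [0..<length ks]))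
    (big_sup L (sum_list ks) (map (\<lambda>i. msubst L (sum_list ks) (part_cyl ks i) (ss ! i)) [0..<length ks]))"
  then have "le_s L N (big_inf L N (map R [0..<length ks])) (big_sup L N (map S [0..<length ks]))"
    by (simp add: R_def[abs_def] S_def[abs_def] N_def)
  moreover have "big_inf L N (map R [0..<length ks]) \<in> carr L N" "big_sup L N (map S [0..<length ks]) \<in> carr L N"
    using R S by (auto intro!: big_inf_closed big_sup_closed)
  ultimately have RS: "h N (big_inf L N (map R [0..<length ks])) \<subseteq> h N (big_sup L N (map S [0..<length ks]))"
    using le_s_iff_subset by blast
  show "\<exists>i<length ks. le_s L (ks ! i) (rs ! i) (ss ! i)"
  proof (rule ccontr)
    assume "\<not> ?thesis"
    then have "\<forall>i<length ks. \<exists>t. t \<in> h (ks ! i) (rs ! i) \<and> t \<notin> h (ks ! i) (ss ! i)"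
      using le_s_iff_subset r s by auto
    then obtain t where t: "\<forall>i<length ks. t i \<in> h (ks ! i) (rs ! i) \<and> t i \<notin> h (ks ! i) (ss ! i)"
      by metis
    define ts where "ts = map t [0..<length ks]"
    have "t i \<in> tuples W (ks ! i)" if "i < length ks" for i
      using t r h_tuples that by blast
    moreover have ts_nth: "i < length ks \<Longrightarrow> ts ! i = t i" for i
      by (simp add: ts_def)
    ultimately have ts: "length ts = length ks" "\<forall>j<length ks. ts ! j \<in> tuples W (ks ! j)"
      by (auto simp: ts_def)
    have "concat ts \<in> h N (big_inf L N (map R [0..<length ks]))"
      unfolding mem_h_big_inf_map[OF R]
    proof (intro conjI allI impI)
      show "concat ts \<in> tuples W N"
        using concat_in_tuples[OF ts] by (simp add: N_def)
      fix i
      assume "i < length ks"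
      then show "concat ts \<in> h N (R i)"
        using concat_mem_h_part_cyl[OF _ _ ts] t r by (simp add: R_def N_def ts_nth)
    qed
    then obtain i where "i < length ks" "concat ts \<in> h N (S i)"
      using RS mem_h_big_sup_map[OF S] by blast
    then show False
      using concat_mem_h_part_cyl[OF _ _ ts] t s by (simp add: S_def N_def ts_nth)
  qed
qed

lemma append_mem_h_subst:
  assumes \<alpha>: "set \<alpha> \<subseteq> {..<m}" and i: "i < n" and r: "r \<in> carr L (Suc (length \<alpha>))"
    and xs: "xs \<in> tuples W m" and ys: "ys \<in> tuples W n"
  shows "xs @ ys \<in> h (m + n) (msubst L (m + n) (\<alpha> @ [m + i]) r) \<longleftrightarrow>
    map (nth xs) \<alpha> @ [ys ! i] \<in> h (Suc (length \<alpha>)) r"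
proof -
  have "subst_sym (Suc (length \<alpha>)) (m + n) (\<alpha> @ [m + i])"
    using \<alpha> i by (auto simp: subst_sym_def)
  moreover have "xs @ ys \<in> tuples W (m + n)"
    using xs ys by (auto simp: tuples_def)
  moreover have "\<forall>x\<in>set \<alpha>. (xs @ ys) ! x = xs ! x" and "(xs @ ys) ! (m + i) = ys ! i"
    using \<alpha> i xs ys by (auto simp: tuples_def nth_append subset_iff)
  ultimately show ?thesis
    using r by (simp cong: map_cong)
qed

text \<open>Axiom (10): the witnesses for the n existential quantifiers are chosen independently and
  collected in one tuple ys.\<close>

lemma ax10_holds: "ax10 L"
  unfolding ax10_def
proof (intro allI impI)
  fix m and \<alpha>s :: "nat list list" and rs
  assume "length rs = length \<alpha>s \<and> (\<forall>i<length \<alpha>s. (\<forall>j\<in>set (\<alpha>s ! i). j < m) \<and>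
    rs ! i \<in> carr L (Suc (length (\<alpha>s ! i))))"
  moreover define n where "n = length \<alpha>s"
  ultimately have \<alpha>s: "\<And>i. i < n \<Longrightarrow> set (\<alpha>s ! i) \<subseteq> {..<m}"
    and r: "\<And>i. i < n \<Longrightarrow> rs ! i \<in> carr L (Suc (length (\<alpha>s ! i)))"
    by auto
  define F where "F i = msubst L (m + n) (\<alpha>s ! i @ [m + i]) (rs ! i)" for i
  define G where "G i = msubst L m (\<alpha>s ! i) (ex_s L (length (\<alpha>s ! i)) (rs ! i))" for i
  define P where "P i xs y \<longleftrightarrow> map (nth xs) (\<alpha>s ! i) @ [y] \<in> h (Suc (length (\<alpha>s ! i))) (rs ! i)"
    for i xs y
  have \<alpha>: "subst_sym (length (\<alpha>s ! i)) m (\<alpha>s ! i)" if "i < n" for i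
    using \<alpha>s[OF that] by (auto simp: subst_sym_def)
  have \<beta>: "subst_sym (Suc (length (\<alpha>s ! i))) (m + n) (\<alpha>s ! i @ [m + i])" if "i < n" for i
    using \<alpha>s[OF that] that by (fastforce simp: subst_sym_def)
  have F: "\<forall>i<n. F i \<in> carr L (m + n)"
    unfolding F_def using subst_closed[OF \<beta> r] by blast
  have G: "\<forall>i<n. G i \<in> carr L m"
    unfolding G_def using subst_closed[OF \<alpha> ex_closed[OF r]] by blast
  have X: "big_inf L (m + n) (map F [0..<n]) \<in> carr L (m + n)"
    using F by (intro big_inf_closed) auto
  have "xs \<in> h m (ex_iter L m n (big_inf L (m + n) (map F [0..<n]))) \<longleftrightarrow>
      xs \<in> h m (big_inf L m (map G [0..<n]))" for xs
  proof -
    have app: "xs @ ys \<in> h (m + n) (big_inf L (m + n) (map F [0..<n])) \<longleftrightarrow> (\<forall>i<n. P i xs (ys ! i))"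
      if "xs \<in> tuples W m" "ys \<in> tuples W n" for ys
    proof -
      have "xs @ ys \<in> tuples W (m + n)"
        using that by (auto simp: tuples_def)
      then show ?thesis
        using append_mem_h_subst[OF \<alpha>s _ r that] by (simp add: mem_h_big_inf_map[OF F] F_def P_def)
    qed
    have G_iff: "xs \<in> h m (G i) \<longleftrightarrow> xs \<in> tuples W m \<and> (\<exists>y\<in>W. P i xs y)" if "i < n" for i
      using \<alpha>[OF that] r[OF that] map_nth_in_tuples[OF _ \<alpha>[OF that]] by (auto simp: G_def P_def)
    have "xs \<in> h m (ex_iter L m n (big_inf L (m + n) (map F [0..<n]))) \<longleftrightarrow>
        xs \<in> tuples W m \<and> (\<exists>ys\<in>tuples W n. \<forall>i<n. P i xs (ys ! i))"
      using h_ex_iter[OF X] app by auto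
    also have "\<dots> \<longleftrightarrow> xs \<in> tuples W m \<and> (\<forall>i<n. \<exists>y\<in>W. P i xs y)"
      using ex_tuple_iff_all_ex[of W n "\<lambda>i. P i xs"] by simp
    also have "\<dots> \<longleftrightarrow> xs \<in> h m (big_inf L m (map G [0..<n]))"
      using G_iff by (auto simp: mem_h_big_inf_map[OF G])
    finally show ?thesis .
  qed
  then have "ex_iter L m n (big_inf L (m + n) (map F [0..<n])) = big_inf L m (map G [0..<n])"
    by (intro eq_if_h_eq[of _ m] set_eqI big_inf_closed) (use X G in auto)
  then show "ex_iter L m (length \<alpha>s) (big_inf L (m + length \<alpha>s)
      (map (\<lambda>i. msubst L (m + length \<alpha>s) (\<alpha>s ! i @ [m + i]) (rs ! i)) [0..<length \<alpha>s])) =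
    big_inf L m (map (\<lambda>i. msubst L m (\<alpha>s ! i) (ex_s L (length (\<alpha>s ! i)) (rs ! i))) [0..<length \<alpha>s])"
    by (simp add: F_def[abs_def] G_def[abs_def] n_def)
qed

lemma satisfies_axioms: "satisfies_axioms L"
  unfolding satisfies_axioms_def
  using ax0_holds ax1_holds ax2_holds ax3_holds ax4_holds ax5_holds ax6_holds ax7_holds ax8_holds
    ax9_holds ax10_holds by blast

end

lemma satisfies_axioms_if_iso_to_subalg_of_fo:
  assumes L: "is_msalg L" and W: "iso_to_subalg_of_fo L W"
  shows "satisfies_axioms L"
proof -
  obtain h where "is_hom h L (fo_alg W)" "\<And>n. inj_on (h n) (carr L n)"
    "\<And>n x. x \<in> carr L n \<Longrightarrow> h n x \<subseteq> tuples W n"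
    using W by (rule inj_hom_if_iso_to_subalg_of_fo) blast
  then interpret fo_representation L W h
    using L by unfold_locales
  show ?thesis
    by (rule satisfies_axioms)
qed

context fol_algebra
begin

lemma representable: "\<exists>W :: (nat \<times> 'a set) set. iso_to_subalg_of_fo L W"
proof (cases "ex_s L 0 (top_s L 1) = top_s L 0")
  case True
  then interpret fol_algebra_nonempty L
    by unfold_locales
  obtain f :: "'a eps_term \<Rightarrow> nat \<times> 'a set" where "inj f"
    using ex_inj_eps_term by blast
  then have "iso_to_subalg_of_fo L (range f)"
    using iso_to_subalg_of_fo_image[OF is_msalg _ representable_nonempty] by (simp add: inj_on_def inj_def)
  then show ?thesis ..
next
  case False
  then show ?thesis
    using representable_empty by blast
qed

end

theorem theorem4p5:
  fixes L :: "'a msalg"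
  assumes "is_msalg L"
  shows "(satisfies_axioms L \<longrightarrow> (\<exists>W :: (nat \<times> 'a set) set. iso_to_subalg_of_fo L W))
       \<and> (\<forall>W :: 'w set. iso_to_subalg_of_fo L W \<longrightarrow> satisfies_axioms L)"
proof (intro conjI impI allI)
  assume "satisfies_axioms L"
  then interpret fol_algebra L
    using assms by unfold_locales
  show "\<exists>W :: (nat \<times> 'a set) set. iso_to_subalg_of_fo L W"
    by (rule representable)
next
  fix W :: "'w set"
  assume "iso_to_subalg_of_fo L W"
  then show "satisfies_axioms L"
    by (rule satisfies_axioms_if_iso_to_subalg_of_fo[OF assms])
qed

end
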